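(* Let $(M,\circ,\mathrm{OR})$ be a free $\mathbb{D}$-module of rank 3 endowed with a scalar product $\circ$ and an orientation $\mathrm{OR}$. Let $E$ be the set of real 3-dimensional subspaces $P\subset M$ such that $\mathfrak{Du}(x\circ y)=0$ for all $x,y\in P$ and $P\cap\epsilon M=\{0\}$. Then $E$, with the subtraction $B-A$ described in the context, is a 3-dimensional Euclidean affine space modelled on $(V,\cdot,\mathrm{or})$, where $V=M/\epsilon M$ carries the inner product and orientation induced from $M$. Moreover, if $\mathcal{S}$ denotes the space of screws on $E$ with its natural $\mathbb{D}$-module geometry structure, then the map $\beta:M\to\mathcal{S}$ defined by $\beta(z)(A)=\mathcal{s}(A)$, where $z=a+\epsilon\,\mathcal{s}(A)$ is the unique decomposition with $a\in A$ and $\mathcal{s}(A)\in V$, is a well-defined $\mathbb{D}$-linear isomorphism which preserves the scalar product and the orientation, and hence also the cross product ($\beta(z_1\times z_2)=[\beta(z_1),\beta(z_2)]$).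
   Context: $\mathbb{D}=\{a+\epsilon b: a,b\in\mathbb{R}\}$ is the ring of dual numbers, $\epsilon^2=0$, with $\mathfrak{Re}(a+\epsilon b)=a$, $\mathfrak{Du}(a+\epsilon b)=b$. A scalar product on a free $\mathbb{D}$-module $M$ is a symmetric $\mathbb{D}$-bilinear map $\circ:M\times M\to\mathbb{D}$ with $\mathfrak{Re}(x\circ x)\ge0$ for all $x$, with equality iff $x\in\epsilon M$. An orientation of $M$ is a choice of one of the two equivalence classes of ordered bases, where $\{b'_j=A_{jk}b_k\}\sim\{b_k\}$ iff $\det\mathfrak{Re}(A)>0$ ($A$ a dual-number matrix). $V=M/\epsilon M$, with quotient map $\pi$; $\mathfrak{Re}(\cdot\circ\cdot)$ descends to an inner product $\cdot$ on $V$, and the orientation of $M$ descends to an orientation of $V$ (bases of $M$ project to bases of $V$). Multiplication by $\epsilon$ induces a real isomorphism $V\to\epsilon M$, also denoted $\epsilon$. On $M$, the cross product is $x\times y=x^iy^j\epsilon_{ijk}m_k$ where $x=x^im_i$, $y=y^im_i$ and $\{m_i\}$ is any positive orthonormal basis ($m_i\circ m_j=\delta_{ij}$). For $P\in E$ and $v\in V$, $v^P$ is the unique element of $P$ with $\pi(v^P)=v$; since $M=P\oplus\epsilon M$, each $z\in M$ decomposes uniquely as $z=a+\epsilon v$ with $a\in P$, $v\in V$. Subtraction on $E$: for $A,B\in E$ and a positive orthonormal basis $\{e_i\}$ of $V$, one has $e^B_i=e^A_i+\epsilon\,\epsilon_{ijk}d^k e^A_j$ for a real vector $(d^k)$, and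 $B-A:=d^ke_k\in V$. Screws on a Euclidean space $E$ modelled on $(V,\cdot,\mathrm{or})$: a screw is a map $\mathcal{s}:E\to V$ for which there is $s\in V$ (the resultant) with $\mathcal{s}(Q)-\mathcal{s}(P)=s\times(Q-P)$ for all $P,Q\in E$; they form a 6-dimensional real vector space $\mathcal{S}$. Its natural $\mathbb{D}$-module geometry: $\epsilon\,\mathcal{s}$ is the constant field equal to the resultant $s$; scalar product $\mathcal{s}_1\circ\mathcal{s}_2=s_1\cdot s_2+\epsilon(s_1\cdot\mathcal{s}_2(P)+\mathcal{s}_1(P)\cdot s_2)$ (independent of $P$); orientation: for a positive orthonormal frame $(P,(e_1,e_2,e_3))$ of $E$, the basis $(\ell_1,\ell_2,\ell_3)$, $\ell_i(Q)=e_i\times(Q-P)$, is declared positive. The commutator of screws is $[\mathcal{s}_1,\mathcal{s}_2](P)=s_1\times\mathcal{s}_2(P)+\mathcal{s}_1(P)\times s_2$. *)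

theory Defs
  imports "HOL-Analysis.Analysis"
begin

(* Dual numbers a + eps b are represented as pairs (a,b) :: real * real.
   A D-module is a real vector space 'x with a real-linear map ep with ep o ep = 0
   (action of eps).  (a,b) acts as  a x + b (ep x). *)

definition levi :: "3 \<Rightarrow> 3 \<Rightarrow> 3 \<Rightarrow> real" where
  "levi i j k =
     (if (i,j,k) \<in> {(1,2,3),(2,3,1),(3,1,2)} then 1
      else if (i,j,k) \<in> {(1,3,2),(3,2,1),(2,1,3)} then -1 else 0)"

definition dmul :: "real \<times> real \<Rightarrow> real \<times> real \<Rightarrow> real \<times> real" where
  "dmul x y = (fst x * fst y, fst x * snd y + snd x * fst y)"

definition dscale :: "('m::real_vector \<Rightarrow> 'm) \<Rightarrow> real \<times> real \<Rightarrow> 'm \<Rightarrow> 'm" where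
  "dscale eps c x = fst c *\<^sub>R x + snd c *\<^sub>R eps x"

definition mcomb :: "('m::real_vector \<Rightarrow> 'm) \<Rightarrow> (3 \<Rightarrow> 'm) \<Rightarrow> (real^3) \<times> (real^3) \<Rightarrow> 'm" where
  "mcomb eps b ac = (\<Sum>i\<in>UNIV. (fst ac $ i) *\<^sub>R b i + (snd ac $ i) *\<^sub>R eps (b i))"

(* generic notions for a D-module with carrier C and D-linear-combination operator comb *)
definition dbasis_on :: "((3 \<Rightarrow> 'x) \<Rightarrow> (real^3) \<times> (real^3) \<Rightarrow> 'x) \<Rightarrow> 'x set \<Rightarrow> (3 \<Rightarrow> 'x) \<Rightarrow> bool" where
  "dbasis_on comb C b \<longleftrightarrow> (\<forall>i. b i \<in> C) \<and> (\<forall>x\<in>C. \<exists>!ac. x = comb b ac)"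

definition dcoord :: "((3 \<Rightarrow> 'x) \<Rightarrow> (real^3) \<times> (real^3) \<Rightarrow> 'x) \<Rightarrow> (3 \<Rightarrow> 'x) \<Rightarrow> 'x \<Rightarrow> (real^3) \<times> (real^3)" where
  "dcoord comb b x = (THE ac. x = comb b ac)"

(* real part of the D-matrix A with b_j = A_jk b0_k *)
definition reMat :: "((3 \<Rightarrow> 'x) \<Rightarrow> (real^3) \<times> (real^3) \<Rightarrow> 'x) \<Rightarrow> (3 \<Rightarrow> 'x) \<Rightarrow> (3 \<Rightarrow> 'x) \<Rightarrow> real^3^3" where
  "reMat comb b b0 = (\<chi> j k. fst (dcoord comb b0 (b j)) $ k)"

definition is_dorientation :: "((3 \<Rightarrow> 'x) \<Rightarrow> (real^3) \<times> (real^3) \<Rightarrow> 'x) \<Rightarrow> 'x set \<Rightarrow> (3 \<Rightarrow> 'x) set \<Rightarrow> bool" where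
  "is_dorientation comb C Ori \<longleftrightarrow>
     (\<exists>b0. dbasis_on comb C b0 \<and> Ori = {b. dbasis_on comb C b \<and> det (reMat comb b b0) > 0})"

definition rcomb :: "(3 \<Rightarrow> 'v::real_vector) \<Rightarrow> real^3 \<Rightarrow> 'v" where
  "rcomb e d = (\<Sum>i\<in>UNIV. (d $ i) *\<^sub>R e i)"

definition rbasis :: "(3 \<Rightarrow> 'v::real_vector) \<Rightarrow> bool" where
  "rbasis e \<longleftrightarrow> (\<forall>v. \<exists>!d. v = rcomb e d)"

definition rcoord :: "(3 \<Rightarrow> 'v::real_vector) \<Rightarrow> 'v \<Rightarrow> real^3" where
  "rcoord e v = (THE d. v = rcomb e d)"

definition rMat :: "(3 \<Rightarrow> 'v::real_vector) \<Rightarrow> (3 \<Rightarrow> 'v) \<Rightarrow> real^3^3" where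
  "rMat e e0 = (\<chi> j k. rcoord e0 (e j) $ k)"

definition is_rorientation :: "(3 \<Rightarrow> 'v::real_vector) set \<Rightarrow> bool" where
  "is_rorientation Ori \<longleftrightarrow> (\<exists>e0. rbasis e0 \<and> Ori = {e. rbasis e \<and> det (rMat e e0) > 0})"

(* ---- the data: eps, scalar product sp, orientation OR of M, quotient map prj : M -> V = M/eps M ---- *)

definition orV :: "('m::real_vector \<Rightarrow> 'm) \<Rightarrow> ('m \<Rightarrow> 'm \<Rightarrow> real \<times> real) \<Rightarrow> (3 \<Rightarrow> 'm) set
                   \<Rightarrow> ('m \<Rightarrow> 'v::real_vector) \<Rightarrow> (3 \<Rightarrow> 'v) set" where
  "orV eps sp OR prj = {e. rbasis e \<and> (\<exists>b\<in>OR. det (rMat e (prj \<circ> b)) > 0)}"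

definition dotV :: "('m::real_vector \<Rightarrow> 'm) \<Rightarrow> ('m \<Rightarrow> 'm \<Rightarrow> real \<times> real) \<Rightarrow> (3 \<Rightarrow> 'm) set
                   \<Rightarrow> ('m \<Rightarrow> 'v::real_vector) \<Rightarrow> 'v \<Rightarrow> 'v \<Rightarrow> real" where
  "dotV eps sp OR prj u v = fst (sp (SOME x. prj x = u) (SOME y. prj y = v))"

definition posONB_V :: "('m::real_vector \<Rightarrow> 'm) \<Rightarrow> ('m \<Rightarrow> 'm \<Rightarrow> real \<times> real) \<Rightarrow> (3 \<Rightarrow> 'm) set
                   \<Rightarrow> ('m \<Rightarrow> 'v::real_vector) \<Rightarrow> (3 \<Rightarrow> 'v) set" where
  "posONB_V eps sp OR prj =
     {e. e \<in> orV eps sp OR prj \<and> (\<forall>i j. dotV eps sp OR prj (e i) (e j) = (if i = j then 1 else 0))}"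

definition crossV :: "('m::real_vector \<Rightarrow> 'm) \<Rightarrow> ('m \<Rightarrow> 'm \<Rightarrow> real \<times> real) \<Rightarrow> (3 \<Rightarrow> 'm) set
                   \<Rightarrow> ('m \<Rightarrow> 'v::real_vector) \<Rightarrow> 'v \<Rightarrow> 'v \<Rightarrow> 'v" where
  "crossV eps sp OR prj x y = (THE w. \<forall>e\<in>posONB_V eps sp OR prj.
      w = (\<Sum>i\<in>UNIV. \<Sum>j\<in>UNIV. \<Sum>k\<in>UNIV.
             (levi i j k * rcoord e x $ i * rcoord e y $ j) *\<^sub>R e k))"

definition posONB_M :: "('m::real_vector \<Rightarrow> 'm) \<Rightarrow> ('m \<Rightarrow> 'm \<Rightarrow> real \<times> real) \<Rightarrow> (3 \<Rightarrow> 'm) set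
                   \<Rightarrow> (3 \<Rightarrow> 'm) set" where
  "posONB_M eps sp OR = {m. m \<in> OR \<and> (\<forall>i j. sp (m i) (m j) = (if i = j then 1 else 0, 0))}"

definition dcomp :: "('m::real_vector \<Rightarrow> 'm) \<Rightarrow> (3 \<Rightarrow> 'm) \<Rightarrow> 'm \<Rightarrow> 3 \<Rightarrow> real \<times> real" where
  "dcomp eps m x i = (fst (dcoord (mcomb eps) m x) $ i, snd (dcoord (mcomb eps) m x) $ i)"

definition crossM :: "('m::real_vector \<Rightarrow> 'm) \<Rightarrow> ('m \<Rightarrow> 'm \<Rightarrow> real \<times> real) \<Rightarrow> (3 \<Rightarrow> 'm) set
                   \<Rightarrow> 'm \<Rightarrow> 'm \<Rightarrow> 'm" where
  "crossM eps sp OR x y = (THE w. \<forall>m\<in>posONB_M eps sp OR.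
      w = (\<Sum>i\<in>UNIV. \<Sum>j\<in>UNIV. \<Sum>k\<in>UNIV.
             dscale eps (dmul (dcomp eps m x i) (dcomp eps m y j)) (levi i j k *\<^sub>R m k)))"

definition Espace :: "('m::real_vector \<Rightarrow> 'm) \<Rightarrow> ('m \<Rightarrow> 'm \<Rightarrow> real \<times> real) \<Rightarrow> 'm set set" where
  "Espace eps sp = {P. subspace P \<and> dim P = 3 \<and> (\<forall>x\<in>P. \<forall>y\<in>P. snd (sp x y) = 0)
                       \<and> P \<inter> range eps = {0}}"

definition lift :: "('m::real_vector \<Rightarrow> 'v) \<Rightarrow> 'm set \<Rightarrow> 'v \<Rightarrow> 'm" where
  "lift prj P v = (THE x. x \<in> P \<and> prj x = v)"

(* esub ... B A  is  B - A *)
definition esub :: "('m::real_vector \<Rightarrow> 'm) \<Rightarrow> ('m \<Rightarrow> 'm \<Rightarrow> real \<times> real) \<Rightarrow> (3 \<Rightarrow> 'm) set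
                   \<Rightarrow> ('m \<Rightarrow> 'v::real_vector) \<Rightarrow> 'm set \<Rightarrow> 'm set \<Rightarrow> 'v" where
  "esub eps sp OR prj B A = (THE v. \<forall>e\<in>posONB_V eps sp OR prj. \<exists>d. v = rcomb e d \<and>
      (\<forall>i. lift prj B (e i) = lift prj A (e i)
             + (\<Sum>j\<in>UNIV. \<Sum>k\<in>UNIV. (levi i j k * d $ k) *\<^sub>R eps (lift prj A (e j)))))"

(* screws on E: maps E -> V, normalised to 0 outside E *)
definition screws :: "('m::real_vector \<Rightarrow> 'm) \<Rightarrow> ('m \<Rightarrow> 'm \<Rightarrow> real \<times> real) \<Rightarrow> (3 \<Rightarrow> 'm) set
                   \<Rightarrow> ('m \<Rightarrow> 'v::real_vector) \<Rightarrow> ('m set \<Rightarrow> 'v) set" where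
  "screws eps sp OR prj = {s. (\<forall>A. A \<notin> Espace eps sp \<longrightarrow> s A = 0) \<and>
      (\<exists>r. \<forall>P\<in>Espace eps sp. \<forall>Q\<in>Espace eps sp.
            s Q - s P = crossV eps sp OR prj r (esub eps sp OR prj Q P))}"

definition resultant :: "('m::real_vector \<Rightarrow> 'm) \<Rightarrow> ('m \<Rightarrow> 'm \<Rightarrow> real \<times> real) \<Rightarrow> (3 \<Rightarrow> 'm) set
                   \<Rightarrow> ('m \<Rightarrow> 'v::real_vector) \<Rightarrow> ('m set \<Rightarrow> 'v) \<Rightarrow> 'v" where
  "resultant eps sp OR prj s = (THE r. \<forall>P\<in>Espace eps sp. \<forall>Q\<in>Espace eps sp.
            s Q - s P = crossV eps sp OR prj r (esub eps sp OR prj Q P))"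

definition epsS :: "('m::real_vector \<Rightarrow> 'm) \<Rightarrow> ('m \<Rightarrow> 'm \<Rightarrow> real \<times> real) \<Rightarrow> (3 \<Rightarrow> 'm) set
                   \<Rightarrow> ('m \<Rightarrow> 'v::real_vector) \<Rightarrow> ('m set \<Rightarrow> 'v) \<Rightarrow> ('m set \<Rightarrow> 'v)" where
  "epsS eps sp OR prj s = (\<lambda>A. if A \<in> Espace eps sp then resultant eps sp OR prj s else 0)"

definition scomb :: "('m::real_vector \<Rightarrow> 'm) \<Rightarrow> ('m \<Rightarrow> 'm \<Rightarrow> real \<times> real) \<Rightarrow> (3 \<Rightarrow> 'm) set
                   \<Rightarrow> ('m \<Rightarrow> 'v::real_vector) \<Rightarrow> (3 \<Rightarrow> ('m set \<Rightarrow> 'v)) \<Rightarrow> (real^3) \<times> (real^3) \<Rightarrow> ('m set \<Rightarrow> 'v)" where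
  "scomb eps sp OR prj b ac = (\<lambda>A. \<Sum>i\<in>UNIV. (fst ac $ i) *\<^sub>R b i A
                                   + (snd ac $ i) *\<^sub>R epsS eps sp OR prj (b i) A)"

definition spS :: "('m::real_vector \<Rightarrow> 'm) \<Rightarrow> ('m \<Rightarrow> 'm \<Rightarrow> real \<times> real) \<Rightarrow> (3 \<Rightarrow> 'm) set
                   \<Rightarrow> ('m \<Rightarrow> 'v::real_vector) \<Rightarrow> ('m set \<Rightarrow> 'v) \<Rightarrow> ('m set \<Rightarrow> 'v) \<Rightarrow> real \<times> real" where
  "spS eps sp OR prj s1 s2 =
     (let P = (SOME P. P \<in> Espace eps sp); r1 = resultant eps sp OR prj s1; r2 = resultant eps sp OR prj s2
      in (dotV eps sp OR prj r1 r2, dotV eps sp OR prj r1 (s2 P) + dotV eps sp OR prj (s1 P) r2))"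

definition ellS :: "('m::real_vector \<Rightarrow> 'm) \<Rightarrow> ('m \<Rightarrow> 'm \<Rightarrow> real \<times> real) \<Rightarrow> (3 \<Rightarrow> 'm) set
                   \<Rightarrow> ('m \<Rightarrow> 'v::real_vector) \<Rightarrow> 'm set \<Rightarrow> (3 \<Rightarrow> 'v) \<Rightarrow> 3 \<Rightarrow> ('m set \<Rightarrow> 'v)" where
  "ellS eps sp OR prj P e i = (\<lambda>Q. if Q \<in> Espace eps sp
                                   then crossV eps sp OR prj (e i) (esub eps sp OR prj Q P) else 0)"

definition commS :: "('m::real_vector \<Rightarrow> 'm) \<Rightarrow> ('m \<Rightarrow> 'm \<Rightarrow> real \<times> real) \<Rightarrow> (3 \<Rightarrow> 'm) set
                   \<Rightarrow> ('m \<Rightarrow> 'v::real_vector) \<Rightarrow> ('m set \<Rightarrow> 'v) \<Rightarrow> ('m set \<Rightarrow> 'v) \<Rightarrow> ('m set \<Rightarrow> 'v)" where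
  "commS eps sp OR prj s1 s2 = (\<lambda>P. if P \<in> Espace eps sp
       then crossV eps sp OR prj (resultant eps sp OR prj s1) (s2 P)
            + crossV eps sp OR prj (s1 P) (resultant eps sp OR prj s2)
       else 0)"

definition epsV :: "('m::real_vector \<Rightarrow> 'm) \<Rightarrow> ('m \<Rightarrow> 'v) \<Rightarrow> 'v \<Rightarrow> 'm" where
  "epsV eps prj v = eps (SOME x. prj x = v)"

definition beta :: "('m::real_vector \<Rightarrow> 'm) \<Rightarrow> ('m \<Rightarrow> 'm \<Rightarrow> real \<times> real) \<Rightarrow> (3 \<Rightarrow> 'm) set
                   \<Rightarrow> ('m \<Rightarrow> 'v::real_vector) \<Rightarrow> 'm \<Rightarrow> ('m set \<Rightarrow> 'v)" where
  "beta eps sp OR prj z = (\<lambda>A. if A \<in> Espace eps sp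
       then (THE v. \<exists>a\<in>A. z = a + epsV eps prj v) else 0)"

end

theory Submission
  imports Defs
begin

text \<open>
  Every \<open>P \<in> E\<close> is the image of a linear section \<open>v \<mapsto> v\<^sup>P\<close> of \<open>\<pi> : M \<rightarrow> V\<close>
  that is isotropic for the dual part of \<open>\<circ>\<close>. Two such sections differ by \<open>\<epsilon>\<close> times a
  linear map \<open>V \<rightarrow> V\<close> that is skew-adjoint for the induced inner product, i.e. by
  \<open>v \<mapsto> \<epsilon> (d \<times> v)\<close> for a unique \<open>d\<close>; this \<open>d\<close> is \<open>B - A\<close>, and since
  conversely every \<open>d\<close> produces a new isotropic section, \<open>E\<close> is an affine space over \<open>V\<close>.
  Comparing \<open>z = \<pi>(z)\<^sup>A + \<epsilon> \<beta>(z)(A)\<close> with the same decomposition at \<open>B\<close> gives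
  \<open>\<beta>(z)(B) - \<beta>(z)(A) = \<pi>(z) \<times> (B - A)\<close>: \<open>\<beta>(z)\<close> is a screw with resultant
  \<open>\<pi>(z)\<close>, and \<open>z\<close> is recovered from \<open>\<pi>(z)\<close> and one value of \<open>\<beta>(z)\<close>.
  In the frame \<open>(e\<^sub>i\<^sup>P)\<close> adapted to a point \<open>P\<close> the scalar product, the orientation
  and the cross product of \<open>M\<close> take exactly the form of the screw structure; the Jacobi
  identity shows that the resulting formula for the cross product does not depend on \<open>P\<close>.
\<close>

unbundle cross3_syntax

section \<open>Real frames and the Levi-Civita symbol\<close>

lemma levi_simps [simp]:
  "levi 1 1 1 = 0" "levi 1 1 2 = 0" "levi 1 1 3 = 0"
  "levi 1 2 1 = 0" "levi 1 2 2 = 0" "levi 1 2 3 = 1"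
  "levi 1 3 1 = 0" "levi 1 3 2 = -1" "levi 1 3 3 = 0"
  "levi 2 1 1 = 0" "levi 2 1 2 = 0" "levi 2 1 3 = -1"
  "levi 2 2 1 = 0" "levi 2 2 2 = 0" "levi 2 2 3 = 0"
  "levi 2 3 1 = 1" "levi 2 3 2 = 0" "levi 2 3 3 = 0"
  "levi 3 1 1 = 0" "levi 3 1 2 = 1" "levi 3 1 3 = 0"
  "levi 3 2 1 = -1" "levi 3 2 2 = 0" "levi 3 2 3 = 0"
  "levi 3 3 1 = 0" "levi 3 3 2 = 0" "levi 3 3 3 = 0"
  by (simp_all add: levi_def)

lemma cross3_axis_right_levi: "(x \<times> axis i 1) $ j = (\<Sum>k\<in>UNIV. levi i j k * x $ k)"
  using exhaust_3[of i] exhaust_3[of j] by (auto simp: sum_3 cross3_def axis_def)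

lemma skew_linear_eq_cross3:
  fixes L :: "real^3 \<Rightarrow> real^3"
  assumes L: "linear L" and skew: "\<And>x y. inner (L x) y = - inner x (L y)"
  shows "\<exists>d. \<forall>x. L x = d \<times> x"
proof -
  define A where "A = matrix L"
  have A_skew: "A $ i $ j = - A $ j $ i" for i j
    using skew[of "axis j 1" "axis i 1"] by (simp add: A_def matrix_def inner_axis inner_axis')
  have "L x = vector [A$3$2, A$1$3, A$2$1] \<times> x" for x
    using A_skew[of 1 2] A_skew[of 1 3] A_skew[of 2 3] A_skew[of 1 1] A_skew[of 2 2] A_skew[of 3 3]
    unfolding fun_cong[OF matrix_vector_mul(2)[OF L], symmetric] A_def[symmetric]
    by (simp add: vec_eq_iff forall_3 cross3_def matrix_vector_mult_def sum_3 algebra_simps)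
  then show ?thesis by blast
qed

lemma cross3_left_cancel:
  fixes a b :: "real^3"
  assumes "\<And>x. a \<times> x = b \<times> x"
  shows "a = b"
proof -
  have "(a - b) \<times> axis 1 1 = 0" "(a - b) \<times> axis 2 1 = 0"
    using assms by (simp_all add: Cross3.left_diff_distrib)
  then show ?thesis by (simp add: cross3_def vec_eq_iff forall_3 axis_def)
qed

lemma linear_rcomb: "linear (rcomb e)"
  by (rule linearI) (simp_all add: rcomb_def scaleR_add_left sum.distrib scaleR_sum_right)

lemma rcomb_axis [simp]: "rcomb e (axis i 1) = e i"
proof -
  have "rcomb e (axis i 1) = (\<Sum>j\<in>UNIV. if j = i then e j else 0)"
    unfolding rcomb_def by (rule sum.cong) (auto simp: axis_def)
  then show ?thesis by simp
qed

lemma rcomb_linear_image: "linear g \<Longrightarrow> rcomb (g \<circ> e) d = g (rcomb e d)"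
  by (simp add: rcomb_def linear_sum linear_scale)

lemma levi_sum_eq_rcomb_cross3:
  "(\<Sum>i\<in>UNIV. \<Sum>j\<in>UNIV. \<Sum>k\<in>UNIV. (levi i j k * x $ i * y $ j) *\<^sub>R e k) = rcomb e (x \<times> y)"
  by (simp add: sum_3 rcomb_def cross3_def algebra_simps)

lemma independent_if_rcomb_eq_0:
  fixes e :: "3 \<Rightarrow> 'a::real_vector"
  assumes zero: "\<And>d. rcomb e d = 0 \<Longrightarrow> d = 0"
  shows "inj e" and "independent (range e)"
proof -
  show inj: "inj e"
  proof (rule injI)
    fix i j assume "e i = e j"
    then have "rcomb e (axis i 1 - axis j 1) = 0" by (simp add: linear_diff[OF linear_rcomb])
    then show "i = j" using zero by (fastforce simp: axis_eq_axis)
  qed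
  show "independent (range e)"
  proof
    assume "dependent (range e)"
    then obtain u where u: "\<exists>v\<in>range e. u v \<noteq> 0" "(\<Sum>v\<in>range e. u v *\<^sub>R v) = 0"
      by (auto simp: dependent_finite)
    have "rcomb e (\<chi> i. u (e i)) = (\<Sum>v\<in>range e. u v *\<^sub>R v)"
      by (simp add: rcomb_def sum.reindex[OF inj])
    then have "(\<chi> i. u (e i)) = 0" using u(2) zero by simp
    then show False using u(1) by (auto simp: vec_eq_iff)
  qed
qed

lemma rcomb_rcoord: "rbasis e \<Longrightarrow> rcomb e (rcoord e v) = v"
  unfolding rbasis_def rcoord_def by (metis (mono_tags, lifting) theI')

lemma rcoord_rcomb [simp]: "rbasis e \<Longrightarrow> rcoord e (rcomb e d) = d"
  unfolding rbasis_def rcoord_def by (metis (mono_tags, lifting) the_equality)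

lemma rcoord_basis [simp]: "rbasis e \<Longrightarrow> rcoord e (e i) = axis i 1"
  by (metis rcomb_axis rcoord_rcomb)

lemma linear_rcoord: "rbasis e \<Longrightarrow> linear (rcoord e)"
  by (rule linearI) (metis linear_add[OF linear_rcomb] rcomb_rcoord rcoord_rcomb,
      metis linear_scale[OF linear_rcomb] rcomb_rcoord rcoord_rcomb)

lemma rbasis_independent:
  assumes "rbasis e"
  shows "inj e" and "independent (range e)"
  using independent_if_rcomb_eq_0[of e] rcoord_rcomb[OF assms] by (metis linear_0[OF linear_rcomb])+

lemma rbasis_span: "rbasis e \<Longrightarrow> span (range e) = UNIV"
proof -
  assume e: "rbasis e"
  have "rcomb e d \<in> span (range e)" for d
    unfolding rcomb_def by (intro span_sum span_scale span_base) auto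
  then show ?thesis by (metis UNIV_eq_I e rcomb_rcoord)
qed

lemma card_range_inj_3: "inj (e :: 3 \<Rightarrow> 'a) \<Longrightarrow> card (range e) = 3"
  by (simp add: card_image)

lemma rMat_row: "rMat e e' $ j = rcoord e' (e j)"
  by (simp add: rMat_def vec_eq_iff)

lemma rMat_mult:
  assumes e': "rbasis e'" and e'': "rbasis e''"
  shows "rMat e e'' = rMat e e' ** rMat e' e''"
proof -
  have "rcoord e'' (e j) = (\<Sum>k\<in>UNIV. (rMat e e' $ j $ k) *\<^sub>R rMat e' e'' $ k)" for j
  proof -
    have "rcoord e'' (e j) = rcoord e'' (\<Sum>k\<in>UNIV. (rcoord e' (e j) $ k) *\<^sub>R e' k)"
      using rcomb_rcoord[OF e'] by (simp add: rcomb_def)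
    also have "\<dots> = (\<Sum>k\<in>UNIV. (rcoord e' (e j) $ k) *\<^sub>R rcoord e'' (e' k))"
      by (simp add: linear_sum[OF linear_rcoord[OF e'']] linear_scale[OF linear_rcoord[OF e'']])
    finally show ?thesis by (simp add: rMat_row)
  qed
  then show ?thesis
    by (simp add: vec_eq_iff matrix_matrix_mult_def rMat_def sum_component)
qed

lemma rMat_self: "rbasis e \<Longrightarrow> rMat e e = mat 1"
  by (simp add: rMat_def mat_def vec_eq_iff axis_def)

lemma det_rMat_nonzero:
  assumes "rbasis e" "rbasis e'"
  shows "det (rMat e e') \<noteq> 0"
proof -
  have "rMat e e' ** rMat e' e = mat 1" using rMat_mult[OF assms(2,1), of e] rMat_self[OF assms(1)] by simp
  then have "det (rMat e e') * det (rMat e' e) = 1" by (metis det_I det_mul)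
  then show ?thesis by auto
qed

lemma rcoord_change:
  assumes "rbasis e" "rbasis e'"
  shows "rcoord e' v = transpose (rMat e e') *v rcoord e v"
proof -
  have "rcoord e' v = rcoord e' (\<Sum>j\<in>UNIV. (rcoord e v $ j) *\<^sub>R e j)"
    using rcomb_rcoord[OF assms(1), of v] by (simp add: rcomb_def)
  also have "\<dots> = (\<Sum>j\<in>UNIV. (rcoord e v $ j) *\<^sub>R rMat e e' $ j)"
    by (simp add: linear_sum[OF linear_rcoord[OF assms(2)]] linear_scale[OF linear_rcoord[OF assms(2)]] rMat_row)
  finally show ?thesis
    by (simp add: vec_eq_iff matrix_vector_mult_def transpose_def sum_component mult.commute)
qed
section \<open>The dual module and its quotient\<close>

locale oriented_dual_module =
  fixes eps :: "'m::real_vector \<Rightarrow> 'm"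
    and sp :: "'m \<Rightarrow> 'm \<Rightarrow> real \<times> real"
    and OR :: "(3 \<Rightarrow> 'm) set"
    and prj :: "'m \<Rightarrow> 'v::real_vector"
  assumes eps_lin: "linear eps"
    and eps_sq: "\<And>x. eps (eps x) = 0"
    and sp_lin: "\<And>y. linear (\<lambda>x. sp x y)"
    and sp_sym: "\<And>x y. sp x y = sp y x"
    and sp_eps: "\<And>x y. sp x (eps y) = (0, fst (sp x y))"
    and sp_pos: "\<And>x. fst (sp x x) \<ge> 0"
    and sp_zero_iff: "\<And>x. fst (sp x x) = 0 \<longleftrightarrow> x \<in> range eps"
    and OR_or: "is_dorientation (mcomb eps) UNIV OR"
    and pi_lin: "linear prj"
    and pi_surj: "surj prj"
    and pi_ker: "\<And>x. prj x = 0 \<longleftrightarrow> x \<in> range eps"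
begin

sublocale eps: linear eps by (fact eps_lin)
sublocale prj: linear prj by (fact pi_lin)

lemma linear_sp_right: "linear (\<lambda>y. sp x y)"
  using sp_lin[of x] by (subst sp_sym)

lemma bilinear_sp: "bilinear sp"
  unfolding bilinear_def using sp_lin linear_sp_right by blast

lemmas sp_simps = bilinear_ladd[OF bilinear_sp] bilinear_radd[OF bilinear_sp]
  bilinear_lmul[OF bilinear_sp] bilinear_rmul[OF bilinear_sp]
  bilinear_lzero[OF bilinear_sp] bilinear_rzero[OF bilinear_sp]
  linear_sum[OF sp_lin] linear_sum[OF linear_sp_right]

lemma Re_sp_eps [simp]: "fst (sp x (eps y)) = 0" "fst (sp (eps y) x) = 0"
  using sp_eps[of x y] sp_sym[of "eps y" x] by simp_all

lemma prj_eps [simp]: "prj (eps x) = 0"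
  using pi_ker[of "eps x"] by simp

lemma eps_eq_0_iff: "eps x = 0 \<longleftrightarrow> prj x = 0"
proof
  assume "eps x = 0"
  then have "fst (sp x x) = 0" using sp_eps[of x x] by (simp add: sp_simps zero_prod_def)
  then show "prj x = 0" using sp_zero_iff pi_ker by blast
qed (use pi_ker eps_sq in auto)

lemma eps_eq_iff: "eps x = eps y \<longleftrightarrow> prj x = prj y"
  using eps_eq_0_iff[of "x - y"] by (simp add: eps.diff prj.diff)

lemma prj_cases: obtains x where "v = prj x"
  using pi_surj by (metis surjD)

abbreviation "dot \<equiv> dotV eps sp OR prj"

lemma Re_sp_prj_cong:
  assumes "prj x = prj x'"
  shows "fst (sp x y) = fst (sp x' y)"
proof -
  have "x - x' \<in> range eps" using assms pi_ker[of "x - x'"] by (simp add: prj.diff)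
  then obtain w where "x = x' + eps w" by (metis add.commute diff_add_cancel rangeE)
  then show ?thesis by (simp add: sp_simps)
qed

lemma dot_prj [simp]: "dot (prj x) (prj y) = fst (sp x y)"
proof -
  have "prj (SOME x'. prj x' = prj x) = prj x" for x by (rule someI) (rule refl)
  then show ?thesis
    unfolding dotV_def by (metis Re_sp_prj_cong sp_sym)
qed

lemma dot_sym: "dot u v = dot v u"
  by (cases u rule: prj_cases, cases v rule: prj_cases) (simp add: sp_sym)

lemma linear_dot_left: "linear (\<lambda>u. dot u w)"
proof (rule linearI)
  fix u v :: 'v and c :: real
  obtain x y z where "u = prj x" "v = prj y" "w = prj z" by (metis prj_cases)
  then show "dot (u + v) w = dot u w + dot v w" "dot (c *\<^sub>R u) w = c *\<^sub>R dot u w"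
    by (simp_all flip: prj.add prj.scale add: sp_simps)
qed

lemma linear_dot_right: "linear (\<lambda>w. dot u w)"
  using linear_dot_left[of u] by (subst dot_sym)

lemma bilinear_dot: "bilinear dot"
  unfolding bilinear_def using linear_dot_left linear_dot_right by blast

lemmas dot_simps = bilinear_ladd[OF bilinear_dot] bilinear_radd[OF bilinear_dot]
  bilinear_lmul[OF bilinear_dot] bilinear_rmul[OF bilinear_dot]
  bilinear_lsub[OF bilinear_dot] bilinear_rsub[OF bilinear_dot]
  bilinear_lneg[OF bilinear_dot] bilinear_rneg[OF bilinear_dot]
  bilinear_lzero[OF bilinear_dot] bilinear_rzero[OF bilinear_dot]
  linear_sum[OF linear_dot_left] linear_sum[OF linear_dot_right]

lemma dot_pos: "v \<noteq> 0 \<Longrightarrow> dot v v > 0"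
  by (cases v rule: prj_cases) (metis dot_prj order_le_less pi_ker sp_pos sp_zero_iff)

lemma dot_self_eq_0_iff: "dot v v = 0 \<longleftrightarrow> v = 0"
  using dot_pos by (fastforce simp: dot_simps)

abbreviation "epsv \<equiv> epsV eps prj"

lemma epsv_prj [simp]: "epsv (prj x) = eps x"
proof -
  have "prj (SOME x'. prj x' = prj x) = prj x" by (rule someI) (rule refl)
  then show ?thesis unfolding epsV_def using eps_eq_iff by blast
qed

lemma linear_epsv: "linear epsv"
proof (rule linearI)
  fix u v :: 'v and c :: real
  obtain x y where "u = prj x" "v = prj y" by (metis prj_cases)
  then show "epsv (u + v) = epsv u + epsv v" "epsv (c *\<^sub>R u) = c *\<^sub>R epsv u"
    by (simp_all flip: prj.add prj.scale add: eps.add eps.scale)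
qed

sublocale epsv: linear epsv by (rule linear_epsv)

lemma epsv_eq_iff: "epsv u = epsv v \<longleftrightarrow> u = v"
  by (cases u rule: prj_cases, cases v rule: prj_cases) (simp add: eps_eq_iff)

lemma prj_epsv [simp]: "prj (epsv v) = 0"
  by (cases v rule: prj_cases) simp

lemma prj_eq_0_iff: "prj x = 0 \<longleftrightarrow> (\<exists>v. x = epsv v)"
  by (metis epsv_prj prj_epsv pi_ker rangeE)

lemma sp_epsv: "sp x (epsv v) = (0, dot (prj x) v)" "sp (epsv v) x = (0, dot v (prj x))"
  by (cases v rule: prj_cases; simp add: sp_eps sp_sym[of _ x])+

lemma prj_mcomb: "prj (mcomb eps b (a, c)) = rcomb (prj \<circ> b) a"
  by (simp add: mcomb_def rcomb_def prj.sum prj.add prj.scale)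

lemma eps_mcomb: "eps (mcomb eps b (a, c)) = mcomb eps b (0, a)"
  by (simp add: mcomb_def eps.sum eps.add eps.scale eps_sq)

lemma mcomb_dcoord: "dbasis_on (mcomb eps) UNIV b \<Longrightarrow> x = mcomb eps b (dcoord (mcomb eps) b x)"
  unfolding dbasis_on_def dcoord_def by (metis (mono_tags, lifting) UNIV_I theI')

lemma dcoord_eqI: "dbasis_on (mcomb eps) UNIV b \<Longrightarrow> x = mcomb eps b ac \<Longrightarrow> dcoord (mcomb eps) b x = ac"
  unfolding dbasis_on_def dcoord_def by (metis (mono_tags, lifting) UNIV_I the_equality)

lemma rbasis_prj_dbasis:
  assumes b: "dbasis_on (mcomb eps) UNIV b"
  shows "rbasis (prj \<circ> b)"
  unfolding rbasis_def
proof
  fix v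
  obtain x where x: "v = prj x" by (rule prj_cases)
  obtain a c where "x = mcomb eps b (a, c)" using mcomb_dcoord[OF b] by (metis prod.collapse)
  then have v: "v = rcomb (prj \<circ> b) a" using x by (simp add: prj_mcomb)
  show "\<exists>!d. v = rcomb (prj \<circ> b) d"
  proof (rule ex1I[of _ a])
    fix d assume "v = rcomb (prj \<circ> b) d"
    then have "prj (mcomb eps b (d - a, 0)) = 0"
      using v by (simp add: prj_mcomb linear_diff[OF linear_rcomb])
    then obtain y where y: "mcomb eps b (d - a, 0) = eps y" using pi_ker by blast
    obtain a' c' where "y = mcomb eps b (a', c')" using mcomb_dcoord[OF b] by (metis prod.collapse)
    then have "mcomb eps b (d - a, 0) = mcomb eps b (0, a')" using y by (simp add: eps_mcomb)
    then show "d = a" using dcoord_eqI[OF b] by (metis fst_conv eq_iff_diff_eq_0)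
  qed (rule v)
qed

lemma fst_dcoord:
  assumes b: "dbasis_on (mcomb eps) UNIV b"
  shows "fst (dcoord (mcomb eps) b x) = rcoord (prj \<circ> b) (prj x)"
proof -
  have "prj x = rcomb (prj \<circ> b) (fst (dcoord (mcomb eps) b x))"
    using mcomb_dcoord[OF b, of x] by (metis prj_mcomb prod.collapse)
  then show ?thesis using rcoord_rcomb[OF rbasis_prj_dbasis[OF b]] by simp
qed

lemma reMat_eq_rMat:
  assumes "dbasis_on (mcomb eps) UNIV b'"
  shows "reMat (mcomb eps) b b' = rMat (prj \<circ> b) (prj \<circ> b')"
  by (simp add: reMat_def rMat_def fst_dcoord[OF assms])

definition ref_basis :: "3 \<Rightarrow> 'm" where
  "ref_basis = (SOME b0. dbasis_on (mcomb eps) UNIV b0 \<and>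
      OR = {b. dbasis_on (mcomb eps) UNIV b \<and> det (reMat (mcomb eps) b b0) > 0})"

lemma ref_basis: "dbasis_on (mcomb eps) UNIV ref_basis"
  "OR = {b. dbasis_on (mcomb eps) UNIV b \<and> det (reMat (mcomb eps) b ref_basis) > 0}"
proof -
  have "dbasis_on (mcomb eps) UNIV ref_basis \<and>
      OR = {b. dbasis_on (mcomb eps) UNIV b \<and> det (reMat (mcomb eps) b ref_basis) > 0}"
    by (rule someI_ex[OF OR_or[unfolded is_dorientation_def], folded ref_basis_def])
  then show "dbasis_on (mcomb eps) UNIV ref_basis"
    "OR = {b. dbasis_on (mcomb eps) UNIV b \<and> det (reMat (mcomb eps) b ref_basis) > 0}"
    by (rule conjunct1, rule conjunct2)
qed

definition ref_frame :: "3 \<Rightarrow> 'v" where "ref_frame = prj \<circ> ref_basis"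

lemma rbasis_ref_frame: "rbasis ref_frame"
  unfolding ref_frame_def by (rule rbasis_prj_dbasis[OF ref_basis(1)])

lemma OR_iff: "b \<in> OR \<longleftrightarrow> dbasis_on (mcomb eps) UNIV b \<and> det (rMat (prj \<circ> b) ref_frame) > 0"
  by (subst ref_basis(2)) (simp add: reMat_eq_rMat[OF ref_basis(1)] ref_frame_def)

lemma ref_basis_in_OR: "ref_basis \<in> OR"
  by (simp add: OR_iff ref_basis(1) flip: ref_frame_def) (simp add: rMat_self[OF rbasis_ref_frame])

lemma orV_iff: "e \<in> orV eps sp OR prj \<longleftrightarrow> rbasis e \<and> det (rMat e ref_frame) > 0"
proof
  assume "e \<in> orV eps sp OR prj"
  then obtain b where e: "rbasis e" and b: "b \<in> OR" and pos: "det (rMat e (prj \<circ> b)) > 0"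
    unfolding orV_def by auto
  from b have "rbasis (prj \<circ> b)" and pos': "det (rMat (prj \<circ> b) ref_frame) > 0"
    by (simp_all add: OR_iff rbasis_prj_dbasis)
  then have "det (rMat e ref_frame) = det (rMat e (prj \<circ> b)) * det (rMat (prj \<circ> b) ref_frame)"
    using rMat_mult[OF _ rbasis_ref_frame, of "prj \<circ> b" e] by (simp add: det_mul)
  then show "rbasis e \<and> det (rMat e ref_frame) > 0" using e pos pos' by simp
next
  assume "rbasis e \<and> det (rMat e ref_frame) > 0"
  then show "e \<in> orV eps sp OR prj"
    unfolding orV_def using ref_basis_in_OR by (auto simp: ref_frame_def)
qed

lemma is_rorientation_orV: "is_rorientation (orV eps sp OR prj)"
  unfolding is_rorientation_def using rbasis_ref_frame orV_iff by blast

sublocale V: finite_dimensional_vector_space "scaleR :: real \<Rightarrow> 'v \<Rightarrow> 'v" "range ref_frame"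
  rewrites "module.dependent (*\<^sub>R) = dependent"
    and "module.span (*\<^sub>R) = span"
    and "module.subspace (*\<^sub>R) = subspace"
    and "vector_space.dim (*\<^sub>R) = dim"
    and "Vector_Spaces.linear (*\<^sub>R) (*\<^sub>R) = linear"
  by unfold_locales
    (use rbasis_independent(2)[OF rbasis_ref_frame] rbasis_span[OF rbasis_ref_frame] in
      \<open>auto simp: dependent_raw_def span_raw_def subspace_raw_def dim_raw_def linear_def\<close>)

lemma dim_V: "dim (UNIV :: 'v set) = 3"
  using V.dim_UNIV card_range_inj_3[OF rbasis_independent(1)[OF rbasis_ref_frame]] by simp

section \<open>Orthonormal frames and the cross product on V\<close>

definition orthonormal_frame :: "(3 \<Rightarrow> 'v) \<Rightarrow> bool" where
  "orthonormal_frame e \<longleftrightarrow> (\<forall>i j. dot (e i) (e j) = (if i = j then 1 else 0))"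

lemma posONB_V_iff:
  "e \<in> posONB_V eps sp OR prj \<longleftrightarrow> rbasis e \<and> det (rMat e ref_frame) > 0 \<and> orthonormal_frame e"
  unfolding posONB_V_def orthonormal_frame_def using orV_iff by auto

lemma posONB_V_rbasis: "e \<in> posONB_V eps sp OR prj \<Longrightarrow> rbasis e"
  by (simp add: posONB_V_iff)

lemma dot_rcomb_orthonormal:
  assumes "orthonormal_frame e"
  shows "dot (rcomb e d) (e i) = d $ i"
proof -
  have "dot (rcomb e d) (e i) = (\<Sum>j\<in>UNIV. if j = i then d $ j else 0)"
    unfolding rcomb_def dot_simps
    by (rule sum.cong) (use assms in \<open>auto simp: orthonormal_frame_def\<close>)
  then show ?thesis by simp
qed

lemma orthonormal_frame_rbasis:
  assumes on: "orthonormal_frame e"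
  shows "rbasis e"
  unfolding rbasis_def
proof
  fix v
  have "d = 0" if "rcomb e d = 0" for d
    using that dot_rcomb_orthonormal[OF on, of d] by (simp add: vec_eq_iff dot_simps)
  then have "inj e" and "independent (range e)"
    using independent_if_rcomb_eq_0 by blast+
  then have spans: "span (range e) = UNIV"
    using V.card_eq_dim[of "range e" UNIV] card_range_inj_3 dim_V by auto
  define d where "d = (\<chi> i. dot v (e i))"
  define w where "w = v - rcomb e d"
  have "dot w (e i) = 0" for i
    by (simp add: w_def dot_simps dot_rcomb_orthonormal[OF on] d_def)
  then have "dot w x = 0" for x
    using linear_eq_0_on_span[OF linear_dot_right, of "range e" w x] spans by auto
  then have "v = rcomb e d" using dot_self_eq_0_iff[of w] by (simp add: w_def)
  moreover have "d' = d" if "v = rcomb e d'" for d'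
    using that by (simp add: d_def vec_eq_iff dot_rcomb_orthonormal[OF on])
  ultimately show "\<exists>!d. v = rcomb e d" by blast
qed

lemma rcoord_orthonormal:
  assumes "orthonormal_frame e"
  shows "rcoord e v $ i = dot v (e i)"
  using dot_rcomb_orthonormal[OF assms, of "rcoord e v" i]
  by (simp add: rcomb_rcoord[OF orthonormal_frame_rbasis[OF assms]])

lemma dot_eq_inner_rcoord:
  assumes on: "orthonormal_frame e"
  shows "dot u v = inner (rcoord e u) (rcoord e v)"
proof -
  have "dot u (rcomb e c) = inner (rcoord e u) c" for c
    by (simp add: rcomb_def dot_simps inner_vec_def rcoord_orthonormal[OF on] mult.commute)
  from this[of "rcoord e v"] show ?thesis
    by (simp add: rcomb_rcoord[OF orthonormal_frame_rbasis[OF on]])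
qed

lemma ref_frame_not_in_span:
  "ref_frame 1 \<noteq> 0" "ref_frame 2 \<notin> span {ref_frame 1}" "ref_frame 3 \<notin> span {ref_frame 2, ref_frame 1}"
proof -
  let ?f = ref_frame
  have "range ?f = insert (?f 3) (insert (?f 2) {?f 1})" by (auto simp: UNIV_3)
  moreover have "?f 1 \<noteq> ?f 2" "?f 1 \<noteq> ?f 3" "?f 2 \<noteq> ?f 3"
    using rbasis_independent(1)[OF rbasis_ref_frame] by (auto dest: injD)
  ultimately show "?f 1 \<noteq> 0" "?f 2 \<notin> span {?f 1}" "?f 3 \<notin> span {?f 2, ?f 1}"
    using rbasis_independent(2)[OF rbasis_ref_frame] by (auto simp: independent_insert)
qed

lemma orthonormal_frame_exists: "\<exists>e. orthonormal_frame e"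
proof -
  let ?f = ref_frame
  note f1 = ref_frame_not_in_span(1) and f2 = ref_frame_not_in_span(2)
    and f3 = ref_frame_not_in_span(3)
  define unit where "unit v = (1 / sqrt (dot v v)) *\<^sub>R v" for v
  have unit_norm: "dot (unit v) (unit v) = 1" if "v \<noteq> 0" for v
    using dot_pos[OF that] by (simp add: unit_def dot_simps)
  have unit_orth: "dot u (unit v) = 0" if "dot u v = 0" for u v
    using that by (simp add: unit_def dot_simps)
  have unit_span: "unit v \<in> span S" if "v \<in> span S" for v S
    using that by (simp add: unit_def span_scale)
  define e1 where "e1 = unit (?f 1)"
  define g2 where "g2 = ?f 2 - dot (?f 2) e1 *\<^sub>R e1"
  define e2 where "e2 = unit g2"
  define g3 where "g3 = ?f 3 - dot (?f 3) e1 *\<^sub>R e1 - dot (?f 3) e2 *\<^sub>R e2"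
  define e3 where "e3 = unit g3"
  have e1_span: "e1 \<in> span {?f 1}" unfolding e1_def by (rule unit_span) (simp add: span_base)
  then have "g2 \<noteq> 0" using f2 span_scale[OF e1_span, of "dot (?f 2) e1"] by (auto simp: g2_def)
  have e1_span': "e1 \<in> span {?f 2, ?f 1}"
    using e1_span span_mono[of "{?f 1}" "{?f 2, ?f 1}"] by blast
  have e12_span: "e1 \<in> span {?f 2, ?f 1}" "e2 \<in> span {?f 2, ?f 1}"
    unfolding e2_def g2_def by (intro e1_span' unit_span span_diff span_scale span_base; simp)+
  then have "g3 \<noteq> 0"
    using f3 span_add[OF span_scale[OF e12_span(1)] span_scale[OF e12_span(2)],
        of "dot (?f 3) e1" "dot (?f 3) e2"]
    by (auto simp: g3_def algebra_simps)
  have n1: "dot e1 e1 = 1" using f1 unit_norm by (simp add: e1_def)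
  have n2: "dot e2 e2 = 1" using \<open>g2 \<noteq> 0\<close> unit_norm by (simp add: e2_def)
  have n3: "dot e3 e3 = 1" using \<open>g3 \<noteq> 0\<close> unit_norm by (simp add: e3_def)
  have o12: "dot e1 e2 = 0"
    unfolding e2_def by (rule unit_orth) (simp add: g2_def dot_simps n1 dot_sym[of e1 "?f 2"])
  have o13: "dot e1 e3 = 0"
    unfolding e3_def by (rule unit_orth) (simp add: g3_def dot_simps n1 o12 dot_sym[of e1 "?f 3"])
  have o23: "dot e2 e3 = 0"
    unfolding e3_def by (rule unit_orth)
      (simp add: g3_def dot_simps n2 o12 dot_sym[of e2 "?f 3"] dot_sym[of e2 e1])
  define e where "e i = (if i = 1 then e1 else if i = 2 then e2 else e3)" for i :: 3
  have "orthonormal_frame e"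
    unfolding orthonormal_frame_def forall_3 e_def
    using n1 n2 n3 o12 o13 o23 by (simp add: dot_sym[of e2 e1] dot_sym[of e3 e1] dot_sym[of e3 e2])
  then show ?thesis by blast
qed

lemma posONB_V_exists: "\<exists>e. e \<in> posONB_V eps sp OR prj"
proof -
  obtain e where on: "orthonormal_frame e" using orthonormal_frame_exists by blast
  have rb: "rbasis e" by (rule orthonormal_frame_rbasis[OF on])
  consider "det (rMat e ref_frame) > 0" | "det (rMat e ref_frame) < 0"
    using det_rMat_nonzero[OF rb rbasis_ref_frame] by linarith
  then show ?thesis
  proof cases
    case 1
    then show ?thesis using rb on posONB_V_iff by blast
  next
    case 2
    \<comment> \<open>in dimension 3, negating all vectors reverses the orientation\<close>
    define e' where "e' i = - e i" for i
    have on': "orthonormal_frame e'"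
      using on by (simp add: orthonormal_frame_def e'_def dot_simps)
    have "rMat e' ref_frame = - rMat e ref_frame"
      by (simp add: rMat_def e'_def vec_eq_iff linear_neg[OF linear_rcoord[OF rbasis_ref_frame]])
    then have "det (rMat e' ref_frame) = - det (rMat e ref_frame)"
      by (simp add: det_3)
    then show ?thesis
      using 2 on' orthonormal_frame_rbasis[OF on'] posONB_V_iff by auto
  qed
qed

definition ref_onb :: "3 \<Rightarrow> 'v" where "ref_onb = (SOME e. e \<in> posONB_V eps sp OR prj)"

lemma ref_onb: "ref_onb \<in> posONB_V eps sp OR prj"
  unfolding ref_onb_def using posONB_V_exists by (rule someI_ex)

lemma rMat_posONB_V:
  assumes e: "e \<in> posONB_V eps sp OR prj" and e': "e' \<in> posONB_V eps sp OR prj"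
  shows "orthogonal_matrix (rMat e e')" and "det (rMat e e') = 1"
proof -
  have rb: "rbasis e" "rbasis e'" and on: "orthonormal_frame e" "orthonormal_frame e'"
    and pos: "det (rMat e ref_frame) > 0" "det (rMat e' ref_frame) > 0"
    using e e' posONB_V_iff by auto
  have "transpose (rMat e e') = rMat e' e"
    by (simp add: transpose_def rMat_def rcoord_orthonormal on dot_sym vec_eq_iff)
  then show orth: "orthogonal_matrix (rMat e e')"
    unfolding orthogonal_matrix_def
    using rMat_mult[of e' e e] rMat_mult[of e e' e'] rb by (simp add: rMat_self)
  have "det (rMat e ref_frame) = det (rMat e e') * det (rMat e' ref_frame)"
    using rMat_mult[OF rb(2) rbasis_ref_frame, of e] by (simp add: det_mul)
  then have "det (rMat e e') > 0" using pos by (simp add: zero_less_mult_iff)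
  then show "det (rMat e e') = 1"
    using det_orthogonal_matrix[OF orth] by linarith
qed

lemma rcomb_cross3_posONB_V:
  assumes e: "e \<in> posONB_V eps sp OR prj" and e': "e' \<in> posONB_V eps sp OR prj"
  shows "rcomb e (rcoord e x \<times> rcoord e y) = rcomb e' (rcoord e' x \<times> rcoord e' y)"
proof -
  let ?R = "transpose (rMat e' e)"
  have rb: "rbasis e" "rbasis e'" using e e' posONB_V_iff by auto
  have chg: "rcoord e v = ?R *v rcoord e' v" for v
    by (rule rcoord_change[OF rb(2,1)])
  have "orthogonal_matrix ?R" "det ?R = 1"
    using rMat_posONB_V[OF e' e] by (simp_all add: orthogonal_matrix_transpose)
  then have "rcoord e x \<times> rcoord e y = ?R *v (rcoord e' x \<times> rcoord e' y)"
    using cross_orthogonal_matrix[of ?R "rcoord e' x" "rcoord e' y"] by (simp add: chg)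
  also have "\<dots> = rcoord e (rcomb e' (rcoord e' x \<times> rcoord e' y))"
    by (simp add: chg rb)
  finally show ?thesis by (simp add: rcomb_rcoord[OF rb(1)])
qed

lemma ref_onb_frame: "rbasis ref_onb" "orthonormal_frame ref_onb"
  using ref_onb posONB_V_iff by auto

lemmas rcoord_ref_onb_simps =
  linear_add[OF linear_rcoord[OF ref_onb_frame(1)]] linear_scale[OF linear_rcoord[OF ref_onb_frame(1)]]
  linear_neg[OF linear_rcoord[OF ref_onb_frame(1)]] linear_0[OF linear_rcoord[OF ref_onb_frame(1)]]

abbreviation "crossv \<equiv> crossV eps sp OR prj"

lemma crossv_posONB_V:
  assumes e: "e \<in> posONB_V eps sp OR prj"
  shows "crossv x y = rcomb e (rcoord e x \<times> rcoord e y)"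
proof -
  have "crossv x y = rcomb ref_onb (rcoord ref_onb x \<times> rcoord ref_onb y)"
    unfolding crossV_def levi_sum_eq_rcomb_cross3
  proof (rule the_equality)
    show "\<forall>e\<in>posONB_V eps sp OR prj.
        rcomb ref_onb (rcoord ref_onb x \<times> rcoord ref_onb y) = rcomb e (rcoord e x \<times> rcoord e y)"
      using rcomb_cross3_posONB_V[OF ref_onb] by blast
  qed (use ref_onb in blast)
  also have "\<dots> = rcomb e (rcoord e x \<times> rcoord e y)"
    by (rule rcomb_cross3_posONB_V[OF ref_onb e])
  finally show ?thesis .
qed

lemma rcoord_crossv: "rcoord ref_onb (crossv x y) = rcoord ref_onb x \<times> rcoord ref_onb y"
  by (simp add: crossv_posONB_V[OF ref_onb] ref_onb_frame)

lemma eq_iff_rcoord_ref_onb: "u = v \<longleftrightarrow> rcoord ref_onb u = rcoord ref_onb v"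
  by (metis rcomb_rcoord ref_onb_frame(1))

lemma bilinear_crossv: "bilinear crossv"
  unfolding bilinear_def
  by (auto intro!: linearI simp: eq_iff_rcoord_ref_onb rcoord_crossv rcoord_ref_onb_simps
      cross_add_left cross_add_right cross_mult_left cross_mult_right)

lemma linear_crossv_right: "linear (crossv d)"
  using bilinear_crossv by (simp add: bilinear_def)

lemmas crossv_simps = bilinear_ladd[OF bilinear_crossv] bilinear_radd[OF bilinear_crossv]
  bilinear_lmul[OF bilinear_crossv] bilinear_rmul[OF bilinear_crossv]
  bilinear_lneg[OF bilinear_crossv] bilinear_rneg[OF bilinear_crossv]

lemma crossv_skew: "crossv x y = - crossv y x"
  by (simp add: eq_iff_rcoord_ref_onb rcoord_crossv rcoord_ref_onb_simps cross_skew[of "rcoord ref_onb x"])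

lemma crossv_jacobi: "crossv d (crossv u w) + crossv u (crossv w d) + crossv w (crossv d u) = 0"
proof -
  have "a \<times> (b \<times> c) + b \<times> (c \<times> a) + c \<times> (a \<times> b) = 0" for a b c :: "real^3"
    unfolding cross3_def by (simp add: vec_eq_iff forall_3 vector_3 algebra_simps)
  then show ?thesis
    by (simp add: eq_iff_rcoord_ref_onb rcoord_crossv rcoord_ref_onb_simps)
qed

lemma dot_crossv_skew: "dot (crossv d u) w = - dot u (crossv d w)"
proof -
  have "inner (a \<times> b) c = - inner b (a \<times> c)" for a b c :: "real^3"
    unfolding cross3_def by (simp add: inner_vec_def sum_3 vector_3 algebra_simps)
  then show ?thesis by (simp add: dot_eq_inner_rcoord[OF ref_onb_frame(2)] rcoord_crossv)
qed

lemma skew_linear_eq_crossv: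
  assumes L: "linear L" and skew: "\<And>u w. dot (L u) w = - dot u (L w)"
  shows "\<exists>d. \<forall>v. L v = crossv d v"
proof -
  let ?c = "rcoord ref_onb" and ?r = "rcomb ref_onb"
  have "linear (?c \<circ> L \<circ> ?r)"
    using linear_rcomb L linear_rcoord[OF ref_onb_frame(1)] by (intro linear_compose)
  moreover have "inner ((?c \<circ> L \<circ> ?r) x) y = - inner x ((?c \<circ> L \<circ> ?r) y)" for x y
    using skew[of "?r x" "?r y"] by (simp add: dot_eq_inner_rcoord[OF ref_onb_frame(2)] ref_onb_frame)
  ultimately obtain d where d: "\<And>x. (?c \<circ> L \<circ> ?r) x = d \<times> x"
    using skew_linear_eq_cross3 by blast
  have "L v = crossv (?r d) v" for v
    using d[of "?c v"] by (simp add: eq_iff_rcoord_ref_onb rcoord_crossv ref_onb_frame rcomb_rcoord)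
  then show ?thesis by blast
qed

lemma crossv_left_cancel:
  assumes "\<And>v. crossv a v = crossv b v"
  shows "a = b"
proof -
  have "rcoord ref_onb a \<times> x = rcoord ref_onb b \<times> x" for x
    using assms[of "rcomb ref_onb x"] by (simp add: eq_iff_rcoord_ref_onb rcoord_crossv ref_onb_frame)
  then show ?thesis by (simp add: eq_iff_rcoord_ref_onb cross3_left_cancel)
qed

lemma levi_sum_eq_crossv:
  assumes e: "e \<in> posONB_V eps sp OR prj"
  shows "(\<Sum>j\<in>UNIV. \<Sum>k\<in>UNIV. (levi i j k * d $ k) *\<^sub>R e j) = crossv (rcomb e d) (e i)"
proof -
  have rb: "rbasis e" using e posONB_V_iff by auto
  have "crossv (rcomb e d) (e i) = rcomb e (d \<times> axis i 1)"
    by (simp add: crossv_posONB_V[OF e] rb)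
  also have "\<dots> = (\<Sum>j\<in>UNIV. (\<Sum>k\<in>UNIV. levi i j k * d $ k) *\<^sub>R e j)"
    by (simp add: rcomb_def cross3_axis_right_levi)
  finally show ?thesis by (simp add: scaleR_sum_left)
qed

section \<open>The affine space E\<close>

abbreviation "E \<equiv> Espace eps sp"

lemma EspaceD:
  assumes "P \<in> E"
  shows "subspace P" and "\<And>x y. x \<in> P \<Longrightarrow> y \<in> P \<Longrightarrow> snd (sp x y) = 0"
    and "\<And>x. x \<in> P \<Longrightarrow> prj x = 0 \<Longrightarrow> x = 0"
  using assms pi_ker unfolding Espace_def by auto

lemma Espace_prj_surj:
  assumes P: "P \<in> E"
  shows "prj ` P = UNIV"
proof -
  obtain B where B: "B \<subseteq> P" "independent B" "P \<subseteq> span B" "card B = 3"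
    using basis_exists[of P] P unfolding Espace_def by auto
  have span_B: "span B = P" using B(1,3) span_minimal[OF B(1) EspaceD(1)[OF P]] by auto
  have "inj_on prj (span B)"
    using EspaceD(1,3)[OF P] span_B
    by (simp add: linear_inj_on_iff_eq_0[OF pi_lin] subspace_span)
  then have "independent (prj ` B)" and "card (prj ` B) = 3"
    using B(2,4) linear_independent_injective_image[OF pi_lin] card_image
      inj_on_subset[OF _ span_superset] by metis+
  moreover from this(2) have "finite (prj ` B)" by (simp add: card_ge_0_finite)
  ultimately have "UNIV \<subseteq> span (prj ` B)"
    using V.card_eq_dim[of "prj ` B" UNIV] dim_V by simp
  then show ?thesis using span_B linear_span_image[OF pi_lin, of B] by auto
qed

lemma Espace_lift_ex1:
  assumes P: "P \<in> E"
  shows "\<exists>!x. x \<in> P \<and> prj x = v"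
proof -
  have "x = y" if "x \<in> P" "y \<in> P" "prj x = prj y" for x y
    using that EspaceD(3)[OF P, of "x - y"] subspace_diff[OF EspaceD(1)[OF P]] by (simp add: prj.diff)
  moreover have "v \<in> prj ` P" using Espace_prj_surj[OF P] by simp
  ultimately show ?thesis by blast
qed

abbreviation "lift_at \<equiv> lift prj"

lemma lift_in: "P \<in> E \<Longrightarrow> lift_at P v \<in> P"
  and prj_lift [simp]: "P \<in> E \<Longrightarrow> prj (lift_at P v) = v"
  using theI'[OF Espace_lift_ex1, of P v] unfolding lift_def by auto

lemma lift_eqI: "P \<in> E \<Longrightarrow> x \<in> P \<Longrightarrow> prj x = v \<Longrightarrow> lift_at P v = x"
  using Espace_lift_ex1 lift_in prj_lift by blast

lemma linear_lift:
  assumes P: "P \<in> E"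
  shows "linear (lift_at P)"
proof (rule linearI)
  fix u w :: 'v and c :: real
  show "lift_at P (u + w) = lift_at P u + lift_at P w"
    by (rule lift_eqI[OF P]) (simp_all add: P lift_in prj.add subspace_add[OF EspaceD(1)[OF P]])
  show "lift_at P (c *\<^sub>R u) = c *\<^sub>R lift_at P u"
    by (rule lift_eqI[OF P]) (simp_all add: P lift_in prj.scale subspace_scale[OF EspaceD(1)[OF P]])
qed

lemma range_lift:
  assumes P: "P \<in> E"
  shows "range (lift_at P) = P"
proof
  show "range (lift_at P) \<subseteq> P" using lift_in[OF P] by auto
  show "P \<subseteq> range (lift_at P)" using lift_eqI[OF P] by (metis rangeI subsetI)
qed

lemma sp_lift:
  assumes "P \<in> E"
  shows "sp (lift_at P u) (lift_at P w) = (dot u w, 0)"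
  using EspaceD(2)[OF assms lift_in lift_in, of u w] dot_prj[of "lift_at P u" "lift_at P w"] assms
  by (simp add: prod_eq_iff)

lemma eps_lift [simp]: "P \<in> E \<Longrightarrow> eps (lift_at P v) = epsv v"
  using epsv_prj[of "lift_at P v"] by simp

lemma isotropic_section_in_Espace:
  fixes g :: "'v \<Rightarrow> 'm"
  assumes g: "linear g" and prj_g: "\<And>v. prj (g v) = v"
    and isotropic: "\<And>u w. snd (sp (g u) (g w)) = 0"
  shows "range g \<in> E" and "lift_at (range g) = g"
proof -
  interpret finite_dimensional_vector_space_pair_1
    "scaleR :: real \<Rightarrow> 'v \<Rightarrow> 'v" "range ref_frame" "scaleR :: real \<Rightarrow> 'm \<Rightarrow> 'm"
    rewrites "vector_space.dim ((*\<^sub>R) :: real \<Rightarrow> 'v \<Rightarrow> 'v) = dim"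
      and "vector_space.dim ((*\<^sub>R) :: real \<Rightarrow> 'm \<Rightarrow> 'm) = dim"
      and "module.span ((*\<^sub>R) :: real \<Rightarrow> 'v \<Rightarrow> 'v) = span"
      and "Vector_Spaces.linear ((*\<^sub>R) :: real \<Rightarrow> 'v \<Rightarrow> 'v) ((*\<^sub>R) :: real \<Rightarrow> 'm \<Rightarrow> 'm) = linear"
    by unfold_locales (auto simp: dim_raw_def span_raw_def linear_def)
  have "inj g" by (metis prj_g injI)
  then have "dim (range g) = 3"
    using dim_image_eq[OF g, of UNIV] dim_V by (simp add: inj_on_subset)
  moreover have "range g \<inter> range eps = {0}"
  proof -
    have "x = 0" if "x \<in> range g" "x \<in> range eps" for x
      using that prj_g linear_0[OF g] by (metis imageE prj_eps)
    moreover have "0 \<in> range g" "0 \<in> range eps"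
      using linear_0[OF g] eps.zero by (metis rangeI)+
    ultimately show ?thesis by blast
  qed
  ultimately show rg: "range g \<in> E"
    unfolding Espace_def using linear_subspace_image[OF g subspace_UNIV] isotropic by auto
  show "lift_at (range g) = g"
    by (rule ext, rule lift_eqI[OF rg]) (auto simp: prj_g)
qed

lemma dot_rcomb_functional:
  assumes on: "orthonormal_frame e" and f: "linear f"
  shows "dot (rcomb e (\<chi> j. f (e j))) w = f w"
proof -
  have "dot (rcomb e (\<chi> j. f (e j))) w = (\<Sum>j\<in>UNIV. rcoord e w $ j *\<^sub>R f (e j))"
    by (simp add: rcomb_def dot_simps rcoord_orthonormal[OF on] dot_sym[of w] mult.commute)
  also have "\<dots> = f (rcomb e (rcoord e w))"
    by (simp add: rcomb_def linear_sum[OF f] linear_scale[OF f])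
  finally show ?thesis by (simp add: rcomb_rcoord[OF orthonormal_frame_rbasis[OF on]])
qed

lemma Espace_nonempty: "E \<noteq> {}"
proof -
  define s where "s v = rcomb ref_basis (rcoord ref_frame v)" for v
  have s: "linear s"
    unfolding s_def using linear_compose[OF linear_rcoord[OF rbasis_ref_frame] linear_rcomb]
    by (simp add: o_def)
  have prj_s: "prj (s v) = v" for v
    using rcomb_linear_image[OF pi_lin, of ref_basis] rcomb_rcoord[OF rbasis_ref_frame]
    by (simp add: s_def ref_frame_def)
  define h where "h u w = snd (sp (s u) (s w))" for u w
  have h_sym: "h u w = h w u" for u w by (simp add: h_def sp_sym)
  have h_lin: "linear (h u)" for u
    by (rule linearI) (simp_all add: h_def linear_add[OF s] linear_scale[OF s] sp_simps)
  have h_lin': "linear (\<lambda>u. h u w)" for w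
    using h_lin[of w] by (subst h_sym)
  \<comment> \<open>\<open>s + \<epsilon> K\<close> becomes isotropic when \<open>K\<close> represents \<open>-h/2\<close> through the inner product\<close>
  define K where "K u = rcomb ref_onb (\<chi> j. - h u (ref_onb j) / 2)" for u
  have "linear (\<lambda>u. \<chi> j. - h u (ref_onb j) / 2)"
    by (rule linearI) (simp_all add: vec_eq_iff linear_add[OF h_lin'] linear_scale[OF h_lin'] field_simps)
  then have K: "linear K"
    unfolding K_def using linear_compose[OF _ linear_rcomb] by (simp add: o_def)
  have "linear (\<lambda>w. - h u w / 2)" for u
    by (rule linearI) (simp_all add: linear_add[OF h_lin] linear_scale[OF h_lin] field_simps)
  then have dot_K: "dot (K u) w = - h u w / 2" for u w
    unfolding K_def by (rule dot_rcomb_functional[OF ref_onb_frame(2)])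
  define g where "g v = s v + epsv (K v)" for v
  have "snd (sp (g u) (g w)) = h u w + dot u (K w) + dot (K u) w" for u w
    by (simp add: g_def h_def sp_simps sp_epsv prj_s prj.add)
  then have "snd (sp (g u) (g w)) = 0" for u w
    using dot_K[of u w] dot_K[of w u] dot_sym[of u "K w"] h_sym[of u w] by simp
  moreover have "linear g"
    unfolding g_def using linear_compose_add[OF s linear_compose[OF K linear_epsv]] by (simp add: o_def)
  moreover have "prj (g v) = v" for v by (simp add: g_def prj.add prj_s)
  ultimately show ?thesis using isotropic_section_in_Espace(1) by blast
qed

abbreviation "screw_of \<equiv> beta eps sp OR prj"

lemma lift_decomp:
  assumes A: "A \<in> E"
  shows "\<exists>v. z = lift_at A (prj z) + epsv v"
proof -
  have "prj (z - lift_at A (prj z)) = 0" using A by (simp add: prj.diff)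
  then obtain v where "z - lift_at A (prj z) = epsv v" by (auto simp: prj_eq_0_iff)
  then show ?thesis by (auto simp: algebra_simps)
qed

lemma screw_of_ex1:
  assumes A: "A \<in> E"
  shows "\<exists>!v. \<exists>a\<in>A. z = a + epsv v"
proof -
  have "v = v'" if a: "a \<in> A" "a' \<in> A" and eq: "a + epsv v = a' + epsv v'" for a a' v v'
  proof -
    have "prj a = prj a'" using arg_cong[OF eq, of prj] by (simp add: prj.add)
    then have "a = a'" using lift_eqI[OF A] a by metis
    then show ?thesis using eq epsv_eq_iff by simp
  qed
  then show ?thesis using lift_decomp[OF A, of z] lift_in[OF A] by blast
qed

lemma screw_of_eqI:
  assumes A: "A \<in> E" and "a \<in> A" "z = a + epsv v"
  shows "screw_of z A = v"
proof -
  have "\<exists>a\<in>A. z = a + epsv v" using assms(2,3) by blast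
  then show ?thesis unfolding beta_def using A by (simp add: the1_equality[OF screw_of_ex1[OF A]])
qed

lemma screw_of_decomp:
  assumes A: "A \<in> E"
  shows "z = lift_at A (prj z) + epsv (screw_of z A)"
proof -
  obtain v where "z = lift_at A (prj z) + epsv v" using lift_decomp[OF A] by blast
  moreover from this have "screw_of z A = v" by (rule screw_of_eqI[OF A lift_in[OF A]])
  ultimately show ?thesis by simp
qed

lemma screw_of_outside: "A \<notin> E \<Longrightarrow> screw_of z A = 0"
  by (simp add: beta_def)

lemma linear_screw_of: "linear (\<lambda>z. screw_of z A)"
proof (cases "A \<in> E")
  case A: True
  show ?thesis
  proof (rule linearI)
    fix x y :: 'm and c :: real
    show "screw_of (x + y) A = screw_of x A + screw_of y A"
      using screw_of_decomp[OF A, of x] screw_of_decomp[OF A, of y]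
      by (intro screw_of_eqI[OF A, of "lift_at A (prj x) + lift_at A (prj y)"])
        (simp_all add: A lift_in subspace_add[OF EspaceD(1)[OF A]] epsv.add algebra_simps)
    show "screw_of (c *\<^sub>R x) A = c *\<^sub>R screw_of x A"
      using screw_of_decomp[OF A, of x]
      by (intro screw_of_eqI[OF A, of "c *\<^sub>R lift_at A (prj x)"])
        (simp_all add: A lift_in subspace_scale[OF EspaceD(1)[OF A]] epsv.scale flip: scaleR_add_right)
  qed
qed (simp add: screw_of_outside linearI)

lemma screw_of_lift [simp]: "A \<in> E \<Longrightarrow> screw_of (lift_at A v) A = 0"
  by (rule screw_of_eqI[OF _ lift_in]) simp_all

lemma screw_of_epsv [simp]: "A \<in> E \<Longrightarrow> screw_of (epsv v) A = v"
  by (rule screw_of_eqI[of A 0]) (simp_all add: subspace_0[OF EspaceD(1)])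

abbreviation "point_diff \<equiv> esub eps sp OR prj"

lemma lift_difference_crossv:
  assumes A: "A \<in> E" and B: "B \<in> E"
  shows "\<exists>d. \<forall>v. lift_at B v = lift_at A v + epsv (crossv d v)"
proof -
  define L where "L v = screw_of (lift_at B v) A" for v
  have decomp: "lift_at B v = lift_at A v + epsv (L v)" for v
    using screw_of_decomp[OF A, of "lift_at B v"] B by (simp add: L_def)
  have "linear L"
    unfolding L_def using linear_compose[OF linear_lift[OF B] linear_screw_of] by (simp add: o_def)
  moreover have "dot (L u) w = - dot u (L w)" for u w
  proof -
    \<comment> \<open>isotropy of \<open>B\<close> makes \<open>L\<close> skew-adjoint\<close>
    have "0 = snd (sp (lift_at B u) (lift_at B w))" using sp_lift[OF B] by simp
    also have "\<dots> = dot u (L w) + dot (L u) w"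
      unfolding decomp[of u] decomp[of w] by (simp add: sp_simps sp_lift[OF A] sp_epsv prj.add A)
    finally show ?thesis by simp
  qed
  ultimately obtain d where "\<And>v. L v = crossv d v" using skew_linear_eq_crossv by blast
  then show ?thesis using decomp by auto
qed

lemma levi_sum_eps_lift:
  assumes A: "A \<in> E" and e: "e \<in> posONB_V eps sp OR prj"
  shows "(\<Sum>j\<in>UNIV. \<Sum>k\<in>UNIV. (levi i j k * d $ k) *\<^sub>R eps (lift_at A (e j)))
       = epsv (crossv (rcomb e d) (e i))"
  by (simp add: A levi_sum_eq_crossv[OF e, symmetric] epsv.sum epsv.scale)

lemma esub_eqI:
  assumes A: "A \<in> E" and B: "B \<in> E" and d: "\<And>v. lift_at B v = lift_at A v + epsv (crossv d v)"
  shows "point_diff B A = d"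
  unfolding esub_def
proof (rule the_equality)
  show "\<forall>e\<in>posONB_V eps sp OR prj. \<exists>d'. d = rcomb e d' \<and>
      (\<forall>i. lift_at B (e i) = lift_at A (e i)
        + (\<Sum>j\<in>UNIV. \<Sum>k\<in>UNIV. (levi i j k * d' $ k) *\<^sub>R eps (lift_at A (e j))))"
  proof
    fix e assume e: "e \<in> posONB_V eps sp OR prj"
    show "\<exists>d'. d = rcomb e d' \<and> (\<forall>i. lift_at B (e i) = lift_at A (e i)
        + (\<Sum>j\<in>UNIV. \<Sum>k\<in>UNIV. (levi i j k * d' $ k) *\<^sub>R eps (lift_at A (e j))))"
      using d by (intro exI[of _ "rcoord e d"])
        (simp add: levi_sum_eps_lift[OF A e] rcomb_rcoord[OF posONB_V_rbasis[OF e]])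
  qed
next
  fix w assume "\<forall>e\<in>posONB_V eps sp OR prj. \<exists>d'. w = rcomb e d' \<and>
      (\<forall>i. lift_at B (e i) = lift_at A (e i)
        + (\<Sum>j\<in>UNIV. \<Sum>k\<in>UNIV. (levi i j k * d' $ k) *\<^sub>R eps (lift_at A (e j))))"
  then obtain d' where w: "w = rcomb ref_onb d'" and lifts: "\<forall>i. lift_at B (ref_onb i) = lift_at A (ref_onb i)
        + (\<Sum>j\<in>UNIV. \<Sum>k\<in>UNIV. (levi i j k * d' $ k) *\<^sub>R eps (lift_at A (ref_onb j)))"
    using ref_onb by blast
  have on_basis: "crossv w u = crossv d u" if "u \<in> range ref_onb" for u
    using that lifts d by (auto simp: w levi_sum_eps_lift[OF A ref_onb] epsv_eq_iff)
  have "crossv w v = crossv d v" for v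
    using linear_eq_on_span[OF linear_crossv_right linear_crossv_right on_basis]
      rbasis_span[OF ref_onb_frame(1)] by blast
  then show "w = d" by (rule crossv_left_cancel)
qed

lemma lift_esub:
  assumes A: "A \<in> E" and B: "B \<in> E"
  shows "lift_at B v = lift_at A v + epsv (crossv (point_diff B A) v)"
proof -
  obtain d where d: "\<And>v. lift_at B v = lift_at A v + epsv (crossv d v)"
    using lift_difference_crossv[OF A B] by blast
  then show ?thesis using esub_eqI[OF A B d] by simp
qed

lemma esub_frame:
  assumes A: "A \<in> E" and B: "B \<in> E" and e: "e \<in> posONB_V eps sp OR prj"
  shows "\<exists>d. point_diff B A = rcomb e d \<and>
             (\<forall>i. lift_at B (e i) = lift_at A (e i)
                + (\<Sum>j\<in>UNIV. \<Sum>k\<in>UNIV. (levi i j k * d $ k) *\<^sub>R eps (lift_at A (e j))))"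
  using lift_esub[OF A B] by (intro exI[of _ "rcoord e (point_diff B A)"])
    (simp add: levi_sum_eps_lift[OF A e] rcomb_rcoord[OF posONB_V_rbasis[OF e]])

lemma esub_add:
  assumes A: "A \<in> E" and B: "B \<in> E" and C: "C \<in> E"
  shows "point_diff C B + point_diff B A = point_diff C A"
proof -
  have "lift_at C v = lift_at A v + epsv (crossv (point_diff C B + point_diff B A) v)" for v
    using lift_esub[OF B C, of v] lift_esub[OF A B, of v] by (simp add: crossv_simps epsv.add)
  then show ?thesis by (rule esub_eqI[OF A C, symmetric])
qed

lemma esub_bij:
  assumes A: "A \<in> E"
  shows "bij_betw (\<lambda>B. point_diff B A) E UNIV"
  unfolding bij_betw_def
proof
  show "inj_on (\<lambda>B. point_diff B A) E"
  proof (rule inj_onI)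
    fix B B' assume B: "B \<in> E" and B': "B' \<in> E" and eq: "point_diff B A = point_diff B' A"
    have "lift_at B = lift_at B'"
      by (rule ext) (simp add: lift_esub[OF A B] lift_esub[OF A B'] eq)
    then show "B = B'" by (metis range_lift[OF B] range_lift[OF B'])
  qed
  have "d \<in> (\<lambda>B. point_diff B A) ` E" for d
  proof -
    define g where "g v = lift_at A v + epsv (crossv d v)" for v
    have g: "linear g"
      unfolding g_def
      using linear_compose_add[OF linear_lift[OF A] linear_compose[OF linear_crossv_right linear_epsv]]
      by (simp add: o_def)
    have prj_g: "prj (g v) = v" for v by (simp add: g_def prj.add A)
    have isotropic: "snd (sp (g u) (g w)) = 0" for u w
      using dot_crossv_skew[of d u w]
      by (simp add: g_def sp_simps sp_lift[OF A] sp_epsv prj.add A)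
    have range_g: "range g \<in> E"
      by (rule isotropic_section_in_Espace(1)[OF g prj_g isotropic])
    have "lift_at (range g) = g"
      by (rule isotropic_section_in_Espace(2)[OF g prj_g isotropic])
    then have "point_diff (range g) A = d"
      by (intro esub_eqI[OF A range_g]) (simp add: g_def)
    then show ?thesis using range_g by (metis image_eqI)
  qed
  then show "(\<lambda>B. point_diff B A) ` E = UNIV" by blast
qed

section \<open>Screws\<close>

abbreviation "Screws \<equiv> screws eps sp OR prj"
abbreviation "res \<equiv> resultant eps sp OR prj"

lemma screw_of_change_point:
  assumes P: "P \<in> E" and Q: "Q \<in> E"
  shows "screw_of z Q - screw_of z P = crossv (prj z) (point_diff Q P)"
proof -
  let ?u = "prj z"
  have "lift_at P ?u + epsv (screw_of z P) = lift_at Q ?u + epsv (screw_of z Q)"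
    using trans[OF sym[OF screw_of_decomp[OF P]] screw_of_decomp[OF Q]] .
  also have "\<dots> = lift_at P ?u + epsv (crossv (point_diff Q P) ?u + screw_of z Q)"
    by (simp add: lift_esub[OF P Q] epsv.add)
  finally have "screw_of z P = crossv (point_diff Q P) ?u + screw_of z Q"
    by (simp add: epsv_eq_iff)
  then show ?thesis by (simp add: crossv_skew[of "point_diff Q P"])
qed

lemma screw_of_in_screws: "screw_of z \<in> Screws"
  unfolding screws_def using screw_of_outside screw_of_change_point by blast

lemma resultant_eqI:
  assumes r: "\<forall>P\<in>E. \<forall>Q\<in>E. s Q - s P = crossv r (point_diff Q P)"
  shows "res s = r"
  unfolding resultant_def
proof (rule the_equality)
  fix r' assume r': "\<forall>P\<in>E. \<forall>Q\<in>E. s Q - s P = crossv r' (point_diff Q P)"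
  obtain P where P: "P \<in> E" using Espace_nonempty by blast
  have "crossv r' d = crossv r d" for d
  proof -
    have "d \<in> (\<lambda>Q. point_diff Q P) ` E" using esub_bij[OF P] by (simp add: bij_betw_def)
    then obtain Q where "Q \<in> E" "d = point_diff Q P" by blast
    then show ?thesis using r r' P by simp
  qed
  then show "r' = r" by (rule crossv_left_cancel)
qed (rule r)

lemma resultant_screw_of [simp]: "res (screw_of z) = prj z"
  by (rule resultant_eqI) (simp add: screw_of_change_point)

lemma screws_resultant:
  assumes "s \<in> Screws"
  shows "\<forall>P\<in>E. \<forall>Q\<in>E. s Q - s P = crossv (res s) (point_diff Q P)"
proof -
  obtain r where "\<forall>P\<in>E. \<forall>Q\<in>E. s Q - s P = crossv r (point_diff Q P)"
    using assms unfolding screws_def by blast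
  moreover from this have "res s = r" by (rule resultant_eqI)
  ultimately show ?thesis by simp
qed

lemma screw_of_eps: "screw_of (eps x) = epsS eps sp OR prj (screw_of x)"
proof
  fix A show "screw_of (eps x) A = epsS eps sp OR prj (screw_of x) A"
    using screw_of_epsv[of A "prj x"] by (simp add: epsS_def screw_of_outside)
qed

lemma bij_screw_of: "bij_betw screw_of UNIV Screws"
  unfolding bij_betw_def
proof
  obtain P where P: "P \<in> E" using Espace_nonempty by blast
  show "inj screw_of"
  proof (rule injI)
    fix x y assume eq: "screw_of x = screw_of y"
    then have "prj x = prj y" using resultant_screw_of[of x] resultant_screw_of[of y] by metis
    have "x = lift_at P (prj x) + epsv (screw_of x P)" by (rule screw_of_decomp[OF P])
    also have "\<dots> = lift_at P (prj y) + epsv (screw_of y P)" using \<open>prj x = prj y\<close> eq by simp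
    also have "\<dots> = y" by (rule screw_of_decomp[OF P, symmetric])
    finally show "x = y" .
  qed
  have "s \<in> range screw_of" if s: "s \<in> Screws" for s
  proof -
    define z where "z = lift_at P (res s) + epsv (s P)"
    have prj_z: "prj z = res s" and at_P: "screw_of z P = s P"
      using screw_of_eqI[OF P lift_in[OF P] z_def] P by (simp_all add: z_def prj.add)
    have "screw_of z A = s A" for A
    proof (cases "A \<in> E")
      case True
      then have "screw_of z A - s P = s A - s P"
        using screw_of_change_point[OF P True, of z] screws_resultant[OF s] P prj_z at_P by simp
      then show ?thesis by simp
    next
      case False
      then show ?thesis using s by (simp add: screws_def screw_of_outside)
    qed
    then show ?thesis by (metis rangeI ext)
  qed
  then show "range screw_of = Screws" using screw_of_in_screws by blast
qed

lemma spS_screw_of: "spS eps sp OR prj (screw_of x) (screw_of y) = sp x y"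
proof -
  define P where "P = (SOME P. P \<in> E)"
  have P: "P \<in> E" unfolding P_def using Espace_nonempty by (simp add: some_in_eq)
  have "sp x y = sp (lift_at P (prj x) + epsv (screw_of x P)) (lift_at P (prj y) + epsv (screw_of y P))"
    using arg_cong2[OF screw_of_decomp[OF P, of x] screw_of_decomp[OF P, of y], of sp] .
  also have "\<dots> = (dot (prj x) (prj y), dot (prj x) (screw_of y P) + dot (screw_of x P) (prj y))"
    by (simp add: sp_simps sp_lift[OF P] sp_epsv P prj.add)
  finally show ?thesis by (simp add: spS_def P_def[symmetric])
qed

abbreviation "screw_comb \<equiv> scomb eps sp OR prj"

lemma scomb_screw_of: "screw_comb (screw_of \<circ> b) ac = screw_of (mcomb eps b ac)"
proof
  fix A show "screw_comb (screw_of \<circ> b) ac A = screw_of (mcomb eps b ac) A"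
    by (simp add: scomb_def mcomb_def screw_of_eps linear_sum[OF linear_screw_of]
        linear_add[OF linear_screw_of] linear_scale[OF linear_screw_of])
qed

lemma dbasis_screw_of:
  assumes b: "dbasis_on (mcomb eps) UNIV b"
  shows "dbasis_on screw_comb Screws (screw_of \<circ> b)"
    and "dcoord screw_comb (screw_of \<circ> b) (screw_of x) = dcoord (mcomb eps) b x"
proof -
  have eq_iff: "screw_of x = screw_comb (screw_of \<circ> b) ac \<longleftrightarrow> x = mcomb eps b ac" for x ac
    using bij_screw_of scomb_screw_of by (metis bij_betw_imp_inj_on injD)
  show "dbasis_on screw_comb Screws (screw_of \<circ> b)"
    unfolding dbasis_on_def
  proof (intro conjI ballI allI)
    fix s assume "s \<in> Screws"
    then obtain x where "s = screw_of x" using bij_screw_of by (metis bij_betw_def imageE)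
    then show "\<exists>!ac. s = screw_comb (screw_of \<circ> b) ac"
      using b unfolding dbasis_on_def by (simp add: eq_iff)
  qed (simp add: screw_of_in_screws)
  show "dcoord screw_comb (screw_of \<circ> b) (screw_of x) = dcoord (mcomb eps) b x"
    unfolding dcoord_def eq_iff ..
qed

lemma reMat_screw_of:
  assumes "dbasis_on (mcomb eps) UNIV b'"
  shows "reMat screw_comb (screw_of \<circ> b) (screw_of \<circ> b') = reMat (mcomb eps) b b'"
  unfolding reMat_def using dbasis_screw_of(2)[OF assms] by (simp add: o_def)

lemma mcomb_lift:
  assumes P: "P \<in> E"
  shows "mcomb eps (lift_at P \<circ> e) (a, c) = lift_at P (rcomb e a) + epsv (rcomb e c)"
  by (simp add: mcomb_def rcomb_def linear_sum[OF linear_lift[OF P]] linear_scale[OF linear_lift[OF P]]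
      epsv.sum epsv.scale P sum.distrib)

lemma dbasis_lift:
  assumes P: "P \<in> E" and e: "rbasis e"
  shows "dbasis_on (mcomb eps) UNIV (lift_at P \<circ> e)"
    and "dcoord (mcomb eps) (lift_at P \<circ> e) x = (rcoord e (prj x), rcoord e (screw_of x P))"
proof -
  have "x = mcomb eps (lift_at P \<circ> e) ac \<longleftrightarrow> ac = (rcoord e (prj x), rcoord e (screw_of x P))" for x ac
  proof -
    obtain a c where ac: "ac = (a, c)" by fastforce
    have "x = lift_at P (rcomb e a) + epsv (rcomb e c) \<longleftrightarrow> prj x = rcomb e a \<and> screw_of x P = rcomb e c"
      using screw_of_decomp[OF P, of x] screw_of_eqI[OF P lift_in[OF P]] P by (auto simp: prj.add)
    then show ?thesis
      using ac mcomb_lift[OF P] rcoord_rcomb[OF e] rcomb_rcoord[OF e] by auto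
  qed
  then show "dbasis_on (mcomb eps) UNIV (lift_at P \<circ> e)"
    and "dcoord (mcomb eps) (lift_at P \<circ> e) x = (rcoord e (prj x), rcoord e (screw_of x P))"
    unfolding dbasis_on_def dcoord_def by simp_all
qed

lemma ellS_eq_screw_of_lift:
  assumes P: "P \<in> E"
  shows "ellS eps sp OR prj P e = screw_of \<circ> (lift_at P \<circ> e)"
proof (intro ext)
  fix i Q
  show "ellS eps sp OR prj P e i Q = (screw_of \<circ> (lift_at P \<circ> e)) i Q"
    using screw_of_change_point[OF P, of Q "lift_at P (e i)"] P
    by (cases "Q \<in> E") (simp_all add: ellS_def screw_of_outside)
qed

lemma screw_of_orientation:
  assumes P: "P \<in> E" and e: "e \<in> posONB_V eps sp OR prj"
  shows "dbasis_on screw_comb Screws (ellS eps sp OR prj P e)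
           \<and> (\<forall>b. dbasis_on (mcomb eps) UNIV b \<longrightarrow>
                 (b \<in> OR \<longleftrightarrow> det (reMat screw_comb (screw_of \<circ> b) (ellS eps sp OR prj P e)) > 0))"
proof -
  have rb: "rbasis e" and pos: "det (rMat e ref_frame) > 0" using e posONB_V_iff by auto
  have db: "dbasis_on (mcomb eps) UNIV (lift_at P \<circ> e)" using dbasis_lift(1)[OF P rb] .
  have "b \<in> OR \<longleftrightarrow> det (reMat screw_comb (screw_of \<circ> b) (ellS eps sp OR prj P e)) > 0"
    if b: "dbasis_on (mcomb eps) UNIV b" for b
  proof -
    have "prj \<circ> (lift_at P \<circ> e) = e" using P by (simp add: o_def)
    then have "reMat screw_comb (screw_of \<circ> b) (ellS eps sp OR prj P e) = rMat (prj \<circ> b) e"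
      using ellS_eq_screw_of_lift[OF P] reMat_screw_of[OF db] reMat_eq_rMat[OF db] by simp
    moreover have "det (rMat (prj \<circ> b) ref_frame) = det (rMat (prj \<circ> b) e) * det (rMat e ref_frame)"
      using rMat_mult[OF rb rbasis_ref_frame, of "prj \<circ> b"] by (simp add: det_mul)
    ultimately show ?thesis using OR_iff b pos by (simp add: zero_less_mult_iff)
  qed
  moreover have "dbasis_on screw_comb Screws (ellS eps sp OR prj P e)"
    using dbasis_screw_of(1)[OF db] ellS_eq_screw_of_lift[OF P] by simp
  ultimately show ?thesis by blast
qed

section \<open>Orthonormal frames and the cross product on M\<close>

lemma lift_posONB_V_in_posONB_M:
  assumes P: "P \<in> E" and e: "e \<in> posONB_V eps sp OR prj"
  shows "lift_at P \<circ> e \<in> posONB_M eps sp OR"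
proof -
  have rb: "rbasis e" and pos: "det (rMat e ref_frame) > 0" and on: "orthonormal_frame e"
    using e posONB_V_iff by auto
  have "prj \<circ> (lift_at P \<circ> e) = e" using P by (simp add: o_def)
  then have "lift_at P \<circ> e \<in> OR" using OR_iff dbasis_lift(1)[OF P rb] pos by simp
  moreover have "sp (lift_at P (e i)) (lift_at P (e j)) = (if i = j then 1 else 0, 0)" for i j
    using sp_lift[OF P] on unfolding orthonormal_frame_def by simp
  ultimately show ?thesis unfolding posONB_M_def by simp
qed

lemma posONB_M_eq_lift:
  assumes m: "m \<in> posONB_M eps sp OR"
  shows "\<exists>P\<in>E. \<exists>e\<in>posONB_V eps sp OR prj. m = lift_at P \<circ> e"
proof -
  have mOR: "m \<in> OR" and m_sp: "\<And>i j. sp (m i) (m j) = (if i = j then 1 else 0, 0)"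
    using m unfolding posONB_M_def by auto
  define e where "e = prj \<circ> m"
  have db: "dbasis_on (mcomb eps) UNIV m" and pos: "det (rMat e ref_frame) > 0"
    using mOR OR_iff e_def by auto
  have rb: "rbasis e" using rbasis_prj_dbasis[OF db] e_def by simp
  have "orthonormal_frame e" unfolding orthonormal_frame_def e_def using m_sp by simp
  then have e_pos: "e \<in> posONB_V eps sp OR prj" using posONB_V_iff rb pos by simp
  define g where "g u = rcomb m (rcoord e u)" for u
  have g: "linear g"
    unfolding g_def using linear_compose[OF linear_rcoord[OF rb] linear_rcomb] by (simp add: o_def)
  have prj_g: "prj (g u) = u" for u
    using rcomb_linear_image[OF pi_lin, of m "rcoord e u"] rcomb_rcoord[OF rb] by (simp add: e_def g_def)
  have "snd (sp (m i) (m j)) = 0" for i j using m_sp[of i j] by simp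
  then have isotropic: "snd (sp (g u) (g w)) = 0" for u w
    by (simp add: g_def rcomb_def sp_simps snd_sum)
  have "range g \<in> E" and "lift_at (range g) = g"
    using isotropic_section_in_Espace[OF g prj_g isotropic] by blast+
  moreover have "g \<circ> e = m" by (rule ext) (simp add: g_def rb)
  ultimately show ?thesis using e_pos by metis
qed

definition cross_at :: "'m set \<Rightarrow> 'm \<Rightarrow> 'm \<Rightarrow> 'm" where
  "cross_at P x y = lift_at P (crossv (prj x) (prj y))
     + epsv (crossv (prj x) (screw_of y P) + crossv (screw_of x P) (prj y))"

lemma crossM_frame_sum_lift:
  assumes P: "P \<in> E" and e: "e \<in> posONB_V eps sp OR prj"
  shows "(\<Sum>i\<in>UNIV. \<Sum>j\<in>UNIV. \<Sum>k\<in>UNIV. dscale eps (dmul (dcomp eps (lift_at P \<circ> e) x i)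
            (dcomp eps (lift_at P \<circ> e) y j)) (levi i j k *\<^sub>R (lift_at P \<circ> e) k))
       = cross_at P x y"
proof -
  have rb: "rbasis e" using e posONB_V_iff by auto
  define a where "a = rcoord e (prj x)"
  define c where "c = rcoord e (screw_of x P)"
  define a' where "a' = rcoord e (prj y)"
  define c' where "c' = rcoord e (screw_of y P)"
  have comp: "dcomp eps (lift_at P \<circ> e) x i = (a $ i, c $ i)"
    "dcomp eps (lift_at P \<circ> e) y i = (a' $ i, c' $ i)" for i
    unfolding dcomp_def dbasis_lift(2)[OF P rb] a_def c_def a'_def c'_def by simp_all
  define F where "F p q = (\<Sum>i\<in>UNIV. \<Sum>j\<in>UNIV. \<Sum>k\<in>UNIV. (levi i j k * p $ i * q $ j) *\<^sub>R e k)" for p q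
  have F: "F (rcoord e u) (rcoord e w) = crossv u w" for u w
    by (simp add: F_def levi_sum_eq_rcomb_cross3 crossv_posONB_V[OF e])
  have "dscale eps (dmul (a $ i, c $ i) (a' $ j, c' $ j)) (levi i j k *\<^sub>R lift_at P (e k))
      = lift_at P ((levi i j k * a $ i * a' $ j) *\<^sub>R e k)
        + epsv ((levi i j k * a $ i * c' $ j) *\<^sub>R e k + (levi i j k * c $ i * a' $ j) *\<^sub>R e k)" for i j k
    by (simp add: dscale_def dmul_def linear_scale[OF linear_lift[OF P]] eps.scale P epsv.scale epsv.add
        algebra_simps)
  then have "(\<Sum>i\<in>UNIV. \<Sum>j\<in>UNIV. \<Sum>k\<in>UNIV. dscale eps (dmul (dcomp eps (lift_at P \<circ> e) x i)
            (dcomp eps (lift_at P \<circ> e) y j)) (levi i j k *\<^sub>R (lift_at P \<circ> e) k))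
      = lift_at P (F a a') + epsv (F a c' + F c a')"
    by (simp add: comp F_def sum.distrib linear_sum[OF linear_lift[OF P]] epsv.sum epsv.add)
  also have "\<dots> = cross_at P x y" by (simp add: cross_at_def F a_def a'_def c_def c'_def)
  finally show ?thesis .
qed

lemma cross_at_change_point:
  assumes P: "P \<in> E" and Q: "Q \<in> E"
  shows "cross_at Q x y = cross_at P x y"
proof -
  let ?d = "point_diff Q P" and ?u = "prj x" and ?w = "prj y"
  have moment: "screw_of z Q = screw_of z P + crossv (prj z) ?d" for z
    using screw_of_change_point[OF P Q, of z] by (simp add: algebra_simps)
  \<comment> \<open>the terms produced by the change of point cancel by the Jacobi identity\<close>
  have "crossv ?d (crossv ?u ?w) + crossv ?u (crossv ?w ?d) + crossv (crossv ?u ?d) ?w = 0"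
    using crossv_jacobi[of ?d ?u ?w] crossv_skew[of "crossv ?u ?d" ?w] crossv_skew[of ?u ?d]
    by (simp add: crossv_simps)
  moreover have "cross_at Q x y = cross_at P x y
      + epsv (crossv ?d (crossv ?u ?w) + crossv ?u (crossv ?w ?d) + crossv (crossv ?u ?d) ?w)"
    unfolding cross_at_def lift_esub[OF P Q] moment
    by (simp add: crossv_simps epsv.add algebra_simps)
  ultimately show ?thesis by simp
qed

lemma crossM_eq_cross_at:
  assumes P: "P \<in> E"
  shows "crossM eps sp OR x y = cross_at P x y"
  unfolding crossM_def
proof (rule the_equality)
  show "\<forall>m\<in>posONB_M eps sp OR. cross_at P x y = (\<Sum>i\<in>UNIV. \<Sum>j\<in>UNIV. \<Sum>k\<in>UNIV.
      dscale eps (dmul (dcomp eps m x i) (dcomp eps m y j)) (levi i j k *\<^sub>R m k))"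
    using posONB_M_eq_lift crossM_frame_sum_lift cross_at_change_point[OF P] by fastforce
next
  fix w assume "\<forall>m\<in>posONB_M eps sp OR. w = (\<Sum>i\<in>UNIV. \<Sum>j\<in>UNIV. \<Sum>k\<in>UNIV.
      dscale eps (dmul (dcomp eps m x i) (dcomp eps m y j)) (levi i j k *\<^sub>R m k))"
  then show "w = cross_at P x y"
    using lift_posONB_V_in_posONB_M[OF P ref_onb] crossM_frame_sum_lift[OF P ref_onb] by simp
qed

lemma screw_of_crossM:
  "screw_of (crossM eps sp OR x y) = commS eps sp OR prj (screw_of x) (screw_of y)"
proof
  fix A show "screw_of (crossM eps sp OR x y) A = commS eps sp OR prj (screw_of x) (screw_of y) A"
  proof (cases "A \<in> E")
    case True
    have "screw_of (cross_at A x y) A = crossv (prj x) (screw_of y A) + crossv (screw_of x A) (prj y)"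
      by (rule screw_of_eqI[OF True lift_in[OF True]]) (simp add: cross_at_def)
    then show ?thesis using True by (simp add: commS_def crossM_eq_cross_at)
  qed (simp add: commS_def screw_of_outside)
qed

end

theorem theorem3:
  fixes eps :: "'m::real_vector \<Rightarrow> 'm"
    and sp :: "'m \<Rightarrow> 'm \<Rightarrow> real \<times> real"
    and OR :: "(3 \<Rightarrow> 'm) set"
    and prj :: "'m \<Rightarrow> 'v::real_vector"
  assumes eps_lin: "linear eps"
    and eps_sq: "\<And>x. eps (eps x) = 0"
    and free3: "\<exists>b. dbasis_on (mcomb eps) UNIV b"
    and sp_lin: "\<And>y. linear (\<lambda>x. sp x y)"
    and sp_sym: "\<And>x y. sp x y = sp y x"
    and sp_eps: "\<And>x y. sp x (eps y) = (0, fst (sp x y))"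
    and sp_pos: "\<And>x. fst (sp x x) \<ge> 0"
    and sp_def: "\<And>x. fst (sp x x) = 0 \<longleftrightarrow> x \<in> range eps"
    and OR_or: "is_dorientation (mcomb eps) UNIV OR"
    and pi_lin: "linear prj"
    and pi_surj: "surj prj"
    and pi_ker: "\<And>x. prj x = 0 \<longleftrightarrow> x \<in> range eps"
  shows
    \<comment> \<open>(V, dot, or) is an oriented 3-dimensional Euclidean vector space\<close>
    "(\<forall>u. linear (\<lambda>v. dotV eps sp OR prj u v))
     \<and> (\<forall>u v. dotV eps sp OR prj u v = dotV eps sp OR prj v u)
     \<and> (\<forall>v. v \<noteq> 0 \<longrightarrow> dotV eps sp OR prj v v > 0)
     \<and> dim (UNIV :: 'v set) = 3
     \<and> is_rorientation (orV eps sp OR prj)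
     \<comment> \<open>E with the subtraction B - A is a Euclidean affine space modelled on V\<close>
     \<and> Espace eps sp \<noteq> {}
     \<and> (\<forall>A\<in>Espace eps sp. \<forall>B\<in>Espace eps sp. \<forall>e\<in>posONB_V eps sp OR prj.
           \<exists>d. esub eps sp OR prj B A = rcomb e d \<and>
             (\<forall>i. lift prj B (e i) = lift prj A (e i)
                + (\<Sum>j\<in>UNIV. \<Sum>k\<in>UNIV. (levi i j k * d $ k) *\<^sub>R eps (lift prj A (e j)))))
     \<and> (\<forall>A\<in>Espace eps sp. bij_betw (\<lambda>B. esub eps sp OR prj B A) (Espace eps sp) UNIV)
     \<and> (\<forall>A\<in>Espace eps sp. \<forall>B\<in>Espace eps sp. \<forall>C\<in>Espace eps sp.
           esub eps sp OR prj C B + esub eps sp OR prj B A = esub eps sp OR prj C A)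
     \<comment> \<open>beta is well defined\<close>
     \<and> (\<forall>z. \<forall>A\<in>Espace eps sp. \<exists>!v. \<exists>a\<in>A. z = a + epsV eps prj v)
     \<and> (\<forall>z. beta eps sp OR prj z \<in> screws eps sp OR prj)
     \<comment> \<open>beta is D-linear\<close>
     \<and> (\<forall>x y A. beta eps sp OR prj (x + y) A = beta eps sp OR prj x A + beta eps sp OR prj y A)
     \<and> (\<forall>c x A. beta eps sp OR prj (c *\<^sub>R x) A = c *\<^sub>R beta eps sp OR prj x A)
     \<and> (\<forall>x. beta eps sp OR prj (eps x) = epsS eps sp OR prj (beta eps sp OR prj x))
     \<comment> \<open>beta is bijective onto the screws\<close>
     \<and> bij_betw (beta eps sp OR prj) UNIV (screws eps sp OR prj)
     \<comment> \<open>beta preserves the scalar product\<close>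
     \<and> (\<forall>x y. spS eps sp OR prj (beta eps sp OR prj x) (beta eps sp OR prj y) = sp x y)
     \<comment> \<open>beta preserves the orientation\<close>
     \<and> (\<forall>P\<in>Espace eps sp. \<forall>e\<in>posONB_V eps sp OR prj.
           dbasis_on (scomb eps sp OR prj) (screws eps sp OR prj) (ellS eps sp OR prj P e)
           \<and> (\<forall>b. dbasis_on (mcomb eps) UNIV b \<longrightarrow>
                 (b \<in> OR \<longleftrightarrow>
                  det (reMat (scomb eps sp OR prj) (beta eps sp OR prj \<circ> b) (ellS eps sp OR prj P e)) > 0)))
     \<comment> \<open>and hence the cross product\<close>
     \<and> (\<forall>x y. beta eps sp OR prj (crossM eps sp OR x y)
               = commS eps sp OR prj (beta eps sp OR prj x) (beta eps sp OR prj y))"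
proof -
  interpret oriented_dual_module eps sp OR prj
    by (rule oriented_dual_module.intro) (fact assms)+
  show ?thesis
    apply (intro conjI)
    subgoal using linear_dot_right by blast
    subgoal using dot_sym by blast
    subgoal using dot_pos by blast
    subgoal by (rule dim_V)
    subgoal by (rule is_rorientation_orV)
    subgoal by (rule Espace_nonempty)
    subgoal using esub_frame by blast
    subgoal using esub_bij by blast
    subgoal using esub_add by blast
    subgoal using screw_of_ex1 by blast
    subgoal using screw_of_in_screws by blast
    subgoal using linear_add[OF linear_screw_of] by blast
    subgoal using linear_scale[OF linear_screw_of] by blast
    subgoal using screw_of_eps by blast
    subgoal by (rule bij_screw_of)
    subgoal using spS_screw_of by blast
    subgoal using screw_of_orientation by blast
    subgoal using screw_of_crossM by blast
    done
qed

end
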